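(* Let $\mathcal V$ be a descent category and $f:X\to Y$, $g:Y\to Z$ morphisms of simplicial spaces. If $f$ and $g\circ f$ are hypercovers, then $g$ is a hypercover.
   Context: A descent category is a small category $\mathcal V$ with a subcategory of morphisms called covers such that: $\mathcal V$ has finite limits; pullbacks of covers are covers; if $f$ and $g\circ f$ are covers then $g$ is a cover. A simplicial space is a simplicial object in $\mathcal V$; $\mathrm{Map}(T,X)$ is the finite limit representing simplicial maps $T\to X$ for a finite simplicial set $T$; $\mathrm{Map}(S\hookrightarrow T,f)=\mathrm{Map}(S,X)\times_{\mathrm{Map}(S,Y)}\mathrm{Map}(T,Y)$. A morphism $f:X\to Y$ is a hypercover if $X_n\to\mathrm{Map}(\partial\Delta^n\hookrightarrow\Delta^n,f)$ is a cover for all $n\ge0$. *)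

theory Defs
  imports Main
begin

record ('o, 'm) cat =
  cOb   :: "'o set"
  cAr   :: "'m set"
  cDom  :: "'m \<Rightarrow> 'o"
  cCod  :: "'m \<Rightarrow> 'o"
  cId   :: "'o \<Rightarrow> 'm"
  cComp :: "'m \<Rightarrow> 'm \<Rightarrow> 'm"   (* cComp C g f = g \<circ> f *)

definition hom :: "('o, 'm) cat \<Rightarrow> 'o \<Rightarrow> 'o \<Rightarrow> 'm set" where
  "hom C a b = {f \<in> cAr C. cDom C f = a \<and> cCod C f = b}"

definition category :: "('o, 'm) cat \<Rightarrow> bool" where
  "category C \<longleftrightarrow>
     (\<forall>f \<in> cAr C. cDom C f \<in> cOb C \<and> cCod C f \<in> cOb C) \<and>
     (\<forall>a \<in> cOb C. cId C a \<in> hom C a a) \<and>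
     (\<forall>a b c f g. f \<in> hom C a b \<longrightarrow> g \<in> hom C b c \<longrightarrow> cComp C g f \<in> hom C a c) \<and>
     (\<forall>a b f. f \<in> hom C a b \<longrightarrow> cComp C f (cId C a) = f \<and> cComp C (cId C b) f = f) \<and>
     (\<forall>a b c d f g h. f \<in> hom C a b \<longrightarrow> g \<in> hom C b c \<longrightarrow> h \<in> hom C c d \<longrightarrow>
        cComp C h (cComp C g f) = cComp C (cComp C h g) f)"

text \<open>P with p : P \<rightarrow> dom f, q : P \<rightarrow> dom g is a pullback of the cospan f, g;
  q is the pullback of f along g.\<close>
definition is_pullback :: "('o, 'm) cat \<Rightarrow> 'm \<Rightarrow> 'm \<Rightarrow> 'o \<Rightarrow> 'm \<Rightarrow> 'm \<Rightarrow> bool" where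
  "is_pullback C f g P p q \<longleftrightarrow>
     f \<in> cAr C \<and> g \<in> cAr C \<and> cCod C f = cCod C g \<and>
     P \<in> cOb C \<and> p \<in> hom C P (cDom C f) \<and> q \<in> hom C P (cDom C g) \<and>
     cComp C f p = cComp C g q \<and>
     (\<forall>U p' q'. U \<in> cOb C \<longrightarrow> p' \<in> hom C U (cDom C f) \<longrightarrow> q' \<in> hom C U (cDom C g) \<longrightarrow>
        cComp C f p' = cComp C g q' \<longrightarrow>
        (\<exists>!u. u \<in> hom C U P \<and> cComp C p u = p' \<and> cComp C q u = q'))"

definition is_terminal :: "('o, 'm) cat \<Rightarrow> 'o \<Rightarrow> bool" where
  "is_terminal C t \<longleftrightarrow> t \<in> cOb C \<and> (\<forall>a \<in> cOb C. \<exists>!f. f \<in> hom C a t)"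

text \<open>Finite limits: terminal object and all pullbacks (standard equivalent).\<close>
definition has_finite_limits :: "('o, 'm) cat \<Rightarrow> bool" where
  "has_finite_limits C \<longleftrightarrow>
     (\<exists>t. is_terminal C t) \<and>
     (\<forall>f g. f \<in> cAr C \<longrightarrow> g \<in> cAr C \<longrightarrow> cCod C f = cCod C g \<longrightarrow>
        (\<exists>P p q. is_pullback C f g P p q))"

definition descent_category :: "('o, 'm) cat \<Rightarrow> 'm set \<Rightarrow> bool" where
  "descent_category C Cov \<longleftrightarrow>
     category C \<and> has_finite_limits C \<and>
     Cov \<subseteq> cAr C \<and>
     (\<forall>a \<in> cOb C. cId C a \<in> Cov) \<and>
     (\<forall>f g. f \<in> Cov \<longrightarrow> g \<in> Cov \<longrightarrow> cDom C g = cCod C f \<longrightarrow> cComp C g f \<in> Cov) \<and>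
     (\<forall>f g P p q. f \<in> Cov \<longrightarrow> is_pullback C f g P p q \<longrightarrow> q \<in> Cov) \<and>
     (\<forall>f g. f \<in> cAr C \<longrightarrow> g \<in> cAr C \<longrightarrow> cDom C g = cCod C f \<longrightarrow>
        f \<in> Cov \<longrightarrow> cComp C g f \<in> Cov \<longrightarrow> g \<in> Cov)"

text \<open>A morphism [k] \<rightarrow> [n] of \<Delta> is the list of its values (a weakly monotone list of
  length k+1 with entries \<le> n).\<close>
definition delta :: "nat \<Rightarrow> nat \<Rightarrow> nat list \<Rightarrow> bool" where
  "delta k n \<alpha> \<longleftrightarrow> length \<alpha> = Suc k \<and> sorted \<alpha> \<and> (\<forall>i \<in> set \<alpha>. i \<le> n)"

definition delta_comp :: "nat list \<Rightarrow> nat list \<Rightarrow> nat list" where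
  "delta_comp \<theta> \<phi> = map (\<lambda>i. \<theta> ! i) \<phi>"   (* \<theta> \<circ> \<phi> *)

definition delta_id :: "nat \<Rightarrow> nat list" where
  "delta_id m = [0..<Suc m]"

record ('o, 'm) sobj =
  sob  :: "nat \<Rightarrow> 'o"
  sact :: "nat \<Rightarrow> nat \<Rightarrow> nat list \<Rightarrow> 'm"   (* sact X k n \<theta> : X_n \<rightarrow> X_k for \<theta> : [k] \<rightarrow> [n] *)

definition simplicial_object :: "('o, 'm) cat \<Rightarrow> ('o, 'm) sobj \<Rightarrow> bool" where
  "simplicial_object C X \<longleftrightarrow>
     (\<forall>n. sob X n \<in> cOb C) \<and>
     (\<forall>k n \<theta>. delta k n \<theta> \<longrightarrow> sact X k n \<theta> \<in> hom C (sob X n) (sob X k)) \<and>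
     (\<forall>m. sact X m m (delta_id m) = cId C (sob X m)) \<and>
     (\<forall>k m n \<phi> \<theta>. delta k m \<phi> \<longrightarrow> delta m n \<theta> \<longrightarrow>
        sact X k n (delta_comp \<theta> \<phi>) = cComp C (sact X k m \<phi>) (sact X m n \<theta>))"

definition smor :: "('o, 'm) cat \<Rightarrow> ('o, 'm) sobj \<Rightarrow> ('o, 'm) sobj \<Rightarrow> (nat \<Rightarrow> 'm) \<Rightarrow> bool" where
  "smor C X Y f \<longleftrightarrow>
     (\<forall>n. f n \<in> hom C (sob X n) (sob Y n)) \<and>
     (\<forall>k n \<theta>. delta k n \<theta> \<longrightarrow>
        cComp C (f k) (sact X k n \<theta>) = cComp C (sact Y k n \<theta>) (f n))"

definition smor_comp :: "('o, 'm) cat \<Rightarrow> (nat \<Rightarrow> 'm) \<Rightarrow> (nat \<Rightarrow> 'm) \<Rightarrow> (nat \<Rightarrow> 'm)" where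
  "smor_comp C g f = (\<lambda>n. cComp C (g n) (f n))"

text \<open>A simplicial set is given by carriers T k and actions Ta j k \<phi> : T_k \<rightarrow> T_j.
  smap_into C X U T Ta h means: h is a simplicial map from T to the simplicial set
  Hom(U, X_\<bullet>).\<close>
definition smap_into :: "('o, 'm) cat \<Rightarrow> ('o, 'm) sobj \<Rightarrow> 'o \<Rightarrow> (nat \<Rightarrow> 'a set)
    \<Rightarrow> (nat \<Rightarrow> nat \<Rightarrow> nat list \<Rightarrow> 'a \<Rightarrow> 'a) \<Rightarrow> (nat \<Rightarrow> 'a \<Rightarrow> 'm) \<Rightarrow> bool" where
  "smap_into C X U T Ta h \<longleftrightarrow>
     (\<forall>k x. x \<in> T k \<longrightarrow> h k x \<in> hom C U (sob X k)) \<and>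
     (\<forall>j k \<phi> x. delta j k \<phi> \<longrightarrow> x \<in> T k \<longrightarrow>
        h j (Ta j k \<phi> x) = cComp C (sact X j k \<phi>) (h k x))"

text \<open>M (with universal pair a, b) is Map(S \<hookrightarrow> T, f) = Map(S,X) \<times>_{Map(S,Y)} Map(T,Y):
  it represents compatible pairs (simplicial map S \<rightarrow> Hom(U,X), simplicial map T \<rightarrow> Hom(U,Y)).
  S is a simplicial subset of T (same action).\<close>
definition is_Map_rel :: "('o, 'm) cat \<Rightarrow> ('o, 'm) sobj \<Rightarrow> ('o, 'm) sobj \<Rightarrow> (nat \<Rightarrow> 'm)
    \<Rightarrow> (nat \<Rightarrow> 'a set) \<Rightarrow> (nat \<Rightarrow> 'a set) \<Rightarrow> (nat \<Rightarrow> nat \<Rightarrow> nat list \<Rightarrow> 'a \<Rightarrow> 'a)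
    \<Rightarrow> 'o \<Rightarrow> (nat \<Rightarrow> 'a \<Rightarrow> 'm) \<Rightarrow> (nat \<Rightarrow> 'a \<Rightarrow> 'm) \<Rightarrow> bool" where
  "is_Map_rel C X Y f S T Ta M a b \<longleftrightarrow>
     M \<in> cOb C \<and> smap_into C X M S Ta a \<and> smap_into C Y M T Ta b \<and>
     (\<forall>k x. x \<in> S k \<longrightarrow> cComp C (f k) (a k x) = b k x) \<and>
     (\<forall>U a' b'. U \<in> cOb C \<longrightarrow> smap_into C X U S Ta a' \<longrightarrow> smap_into C Y U T Ta b' \<longrightarrow>
        (\<forall>k x. x \<in> S k \<longrightarrow> cComp C (f k) (a' k x) = b' k x) \<longrightarrow>
        (\<exists>!u. u \<in> hom C U M \<and>
              (\<forall>k x. x \<in> S k \<longrightarrow> a' k x = cComp C (a k x) u) \<and>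
              (\<forall>k x. x \<in> T k \<longrightarrow> b' k x = cComp C (b k x) u)))"

definition std_simplex :: "nat \<Rightarrow> nat \<Rightarrow> nat list set" where
  "std_simplex n k = {\<alpha>. delta k n \<alpha>}"

definition bdry_simplex :: "nat \<Rightarrow> nat \<Rightarrow> nat list set" where
  "bdry_simplex n k = {\<alpha>. delta k n \<alpha> \<and> set \<alpha> \<noteq> {0..n}}"

definition simplex_act :: "nat \<Rightarrow> nat \<Rightarrow> nat list \<Rightarrow> nat list \<Rightarrow> nat list" where
  "simplex_act j k \<phi> \<alpha> = delta_comp \<alpha> \<phi>"

text \<open>f is a hypercover: for every n, the canonical map X_n \<rightarrow> Map(\<partial>\<Delta>^n \<hookrightarrow> \<Delta>^n, f)
  (induced by the n-simplex id of X_n and f_n) is a cover.\<close>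
definition hypercover :: "('o, 'm) cat \<Rightarrow> 'm set \<Rightarrow> ('o, 'm) sobj \<Rightarrow> ('o, 'm) sobj
    \<Rightarrow> (nat \<Rightarrow> 'm) \<Rightarrow> bool" where
  "hypercover C Cov X Y f \<longleftrightarrow>
     (\<forall>n M a b u.
        is_Map_rel C X Y f (bdry_simplex n) (std_simplex n) simplex_act M a b \<longrightarrow>
        u \<in> hom C (sob X n) M \<longrightarrow>
        (\<forall>k \<alpha>. \<alpha> \<in> bdry_simplex n k \<longrightarrow> sact X k n \<alpha> = cComp C (a k \<alpha>) u) \<longrightarrow>
        (\<forall>k \<alpha>. \<alpha> \<in> std_simplex n k \<longrightarrow>
            cComp C (sact Y k n \<alpha>) (f n) = cComp C (b k \<alpha>) u) \<longrightarrow>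
        u \<in> Cov)"

end

theory Submission
  imports Defs
begin

text \<open>A hypercover \<open>f : X \<rightarrow> Y\<close> induces covers \<open>Map(K, X) \<rightarrow> Map(K, Y)\<close> for every finite
  simplicial complex \<open>K\<close>.  Build \<open>K\<close> one face \<open>\<sigma>\<close> (with \<open>m + 1\<close> vertices) at a time:
  \<open>Map(F\<^sub>0 \<union> \<sigma>, X) = Map(F\<^sub>0, X) \<times>\<^bsub>Map(\<partial>\<sigma>, X)\<^esub> X\<^sub>m\<close>, and pasting and cancelling pullback squares
  exhibit the map for \<open>F\<^sub>0 \<union> \<sigma>\<close> as a pullback of the latching map
  \<open>X\<^sub>m \<rightarrow> Map(\<partial>\<sigma>, X) \<times>\<^bsub>Map(\<partial>\<sigma>, Y)\<^esub> Y\<^sub>m\<close> (a cover by the hypercover condition) followed by a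
  pullback of the map for \<open>F\<^sub>0\<close>.  For \<open>K = \<Delta>^n\<close> this says that every \<open>f\<^sub>n\<close> is a cover.

  Now let \<open>u : Y\<^sub>n \<rightarrow> Map(\<partial>\<Delta>^n \<hookrightarrow> \<Delta>^n, g)\<close> be the comparison map of \<open>g\<close>.  Then \<open>u \<circ> f\<^sub>n\<close> is the
  comparison map of \<open>g \<circ> f\<close>, a cover by hypothesis, followed by a pullback of the cover
  \<open>Map(\<partial>\<Delta>^n, X) \<rightarrow> Map(\<partial>\<Delta>^n, Y)\<close>; as \<open>f\<^sub>n\<close> is a cover, so is \<open>u\<close>.\<close>

section \<open>Simplicial complexes and their ordered simplices\<close>

definition simplicial_complex :: "nat set set \<Rightarrow> bool" where
  "simplicial_complex F \<longleftrightarrow> finite F \<and> (\<forall>A\<in>F. A \<noteq> {} \<and> finite A) \<and>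
     (\<forall>A\<in>F. \<forall>B. B \<subseteq> A \<longrightarrow> B \<noteq> {} \<longrightarrow> B \<in> F)"

text \<open>The ordered (possibly degenerate) \<open>k\<close>-simplices of the simplicial set of a complex \<open>F\<close>:
  weakly increasing lists of \<open>k + 1\<close> vertices spanning a face of \<open>F\<close>.\<close>
definition simplices :: "nat set set \<Rightarrow> nat \<Rightarrow> nat list set" where
  "simplices F k = {\<alpha>. length \<alpha> = Suc k \<and> sorted \<alpha> \<and> set \<alpha> \<in> F}"

definition faces :: "nat set \<Rightarrow> nat set set" where
  "faces \<sigma> = {A. A \<noteq> {} \<and> A \<subseteq> \<sigma>}"

definition proper_faces :: "nat set \<Rightarrow> nat set set" where
  "proper_faces \<sigma> = {A. A \<noteq> {} \<and> A \<subseteq> \<sigma> \<and> A \<noteq> \<sigma>}"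

lemma delta_imp_subset: "delta j k \<phi> \<Longrightarrow> set \<phi> \<subseteq> {..<Suc k}"
  by (auto simp: delta_def)

lemma simplices_act:
  assumes "simplicial_complex F" "\<alpha> \<in> simplices F k" "delta j k \<phi>"
  shows "simplex_act j k \<phi> \<alpha> \<in> simplices F j"
proof -
  have \<alpha>: "length \<alpha> = Suc k" "sorted \<alpha>" "set \<alpha> \<in> F"
    using assms(2) by (auto simp: simplices_def)
  have \<phi>: "length \<phi> = Suc j" "sorted \<phi>" "set \<phi> \<subseteq> {..<length \<alpha>}"
    using assms(3) \<alpha> by (auto simp: delta_def)
  have "sorted (delta_comp \<alpha> \<phi>)"
    using \<alpha>(2) \<phi>(2,3) by (auto simp: delta_comp_def sorted_iff_nth_mono subset_iff intro!: sorted_nth_mono)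
  moreover have "length (delta_comp \<alpha> \<phi>) = Suc j" "set (delta_comp \<alpha> \<phi>) \<subseteq> set \<alpha>"
    "set (delta_comp \<alpha> \<phi>) \<noteq> {}"
    using \<phi> by (auto simp: delta_comp_def)
  ultimately show ?thesis
    using assms(1) \<alpha> \<phi> unfolding simplices_def simplex_act_def simplicial_complex_def by auto
qed

lemma simplices_mono: "F \<subseteq> G \<Longrightarrow> simplices F k \<subseteq> simplices G k"
  by (auto simp: simplices_def)

lemma simplices_Un_cases:
  assumes "\<alpha> \<in> simplices (F \<union> G) k"
  obtains "set \<alpha> \<in> F" "\<alpha> \<in> simplices F k" | "set \<alpha> \<notin> F" "\<alpha> \<in> simplices G k"
  using assms by (auto simp: simplices_def)

lemma simplices_proper_faces:
  "\<alpha> \<in> simplices (proper_faces \<sigma>) k \<longleftrightarrow> \<alpha> \<in> simplices (faces \<sigma>) k \<and> set \<alpha> \<noteq> \<sigma>"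
  by (auto simp: simplices_def proper_faces_def faces_def)

lemma simplices_proper_faces_subset: "simplices (proper_faces \<sigma>) k \<subseteq> simplices (faces \<sigma>) k"
  by (auto simp: simplices_def proper_faces_def faces_def)

lemma delta_iff_simplices: "delta k n \<alpha> \<longleftrightarrow> \<alpha> \<in> simplices (faces {0..n}) k"
  by (auto simp: delta_def simplices_def faces_def)

lemma std_simplex_eq: "std_simplex n = simplices (faces {0..n})"
  by (auto simp: std_simplex_def delta_iff_simplices)

lemma bdry_simplex_eq: "bdry_simplex n = simplices (proper_faces {0..n})"
  by (auto simp: bdry_simplex_def delta_def simplices_def proper_faces_def fun_eq_iff)

lemma simplicial_complex_faces: "finite \<sigma> \<Longrightarrow> simplicial_complex (faces \<sigma>)"
  by (auto simp: simplicial_complex_def faces_def intro: finite_subset)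

lemma simplicial_complex_proper_faces: "finite \<sigma> \<Longrightarrow> simplicial_complex (proper_faces \<sigma>)"
  by (auto simp: simplicial_complex_def proper_faces_def intro: finite_subset)

lemma simplicial_complex_remove_maximal_face:
  assumes "simplicial_complex F" "F \<noteq> {}"
  obtains \<sigma> where "\<sigma> \<in> F" "finite \<sigma>" "\<sigma> \<noteq> {}" "simplicial_complex (F - {\<sigma>})"
    "F = (F - {\<sigma>}) \<union> faces \<sigma>" "proper_faces \<sigma> \<subseteq> F - {\<sigma>}"
    "card (F - {\<sigma>}) < card F" "card (proper_faces \<sigma>) < card F"
proof -
  have fin: "finite F" and faces_fin: "\<And>A. A \<in> F \<Longrightarrow> A \<noteq> {} \<and> finite A"
    and closed: "\<And>A B. A \<in> F \<Longrightarrow> B \<subseteq> A \<Longrightarrow> B \<noteq> {} \<Longrightarrow> B \<in> F"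
    using assms(1) unfolding simplicial_complex_def by blast+
  have "Max (card ` F) \<in> card ` F" using fin assms(2) by simp
  then obtain \<sigma> where \<sigma>: "\<sigma> \<in> F" and "card \<sigma> = Max (card ` F)" by auto
  then have max: "\<And>A. A \<in> F \<Longrightarrow> card A \<le> card \<sigma>" using fin by simp
  have \<sigma>_fin: "finite \<sigma>" "\<sigma> \<noteq> {}" using faces_fin \<sigma> by auto
  have "B \<noteq> \<sigma>" if "A \<in> F - {\<sigma>}" "B \<subseteq> A" for A B
  proof
    assume "B = \<sigma>"
    with that have "card \<sigma> < card A" using faces_fin by (auto intro: psubset_card_mono)
    with max that show False by force
  qed
  then have complex: "simplicial_complex (F - {\<sigma>})"
    using fin faces_fin closed unfolding simplicial_complex_def by blast
  have "faces \<sigma> \<subseteq> F" using closed \<sigma> by (auto simp: faces_def)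
  moreover have "card (F - {\<sigma>}) < card F" using fin \<sigma> by (meson card_Diff1_less)
  moreover have "proper_faces \<sigma> \<subseteq> F - {\<sigma>}"
    using \<open>faces \<sigma> \<subseteq> F\<close> by (auto simp: faces_def proper_faces_def)
  moreover have "F = (F - {\<sigma>}) \<union> faces \<sigma>"
    using \<open>faces \<sigma> \<subseteq> F\<close> \<sigma> \<sigma>_fin by (auto simp: faces_def)
  moreover have "card (proper_faces \<sigma>) \<le> card (F - {\<sigma>})"
    using \<open>proper_faces \<sigma> \<subseteq> F - {\<sigma>}\<close> fin by (simp add: card_mono)
  ultimately show ?thesis
    using that[OF \<sigma> \<sigma>_fin complex] by linarith
qed

section \<open>Relabelling a face\<close>

text \<open>A face \<open>\<sigma>\<close> with \<open>m + 1\<close> vertices is relabelled to \<open>{0..m}\<close> by sending its \<open>i\<close>-th smallest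
  vertex to \<open>i\<close>; this identifies the simplicial set of \<open>faces \<sigma>\<close> with \<open>\<Delta>^m\<close>.\<close>
definition vertex_index :: "nat set \<Rightarrow> nat \<Rightarrow> nat" where
  "vertex_index \<sigma> = the_inv_into {..<card \<sigma>} ((!) (sorted_list_of_set \<sigma>))"

definition relabel :: "nat set \<Rightarrow> nat list \<Rightarrow> nat list" where
  "relabel \<sigma> = map (vertex_index \<sigma>)"

definition unrelabel :: "nat set \<Rightarrow> nat list \<Rightarrow> nat list" where
  "unrelabel \<sigma> = map ((!) (sorted_list_of_set \<sigma>))"

context
  fixes \<sigma> :: "nat set"
  assumes fin: "finite \<sigma>"
begin

lemma bij_betw_nth_sorted_list_of_set:
  "bij_betw ((!) (sorted_list_of_set \<sigma>)) {..<card \<sigma>} \<sigma>"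
  using fin by (metis bij_betw_nth distinct_sorted_list_of_set length_sorted_list_of_set
      set_sorted_list_of_set)

lemma vertex_index_less: "a \<in> \<sigma> \<Longrightarrow> vertex_index \<sigma> a < card \<sigma>"
  unfolding vertex_index_def
  using bij_betw_nth_sorted_list_of_set bij_betw_the_inv_into bij_betw_apply by fastforce

lemma nth_vertex_index: "a \<in> \<sigma> \<Longrightarrow> sorted_list_of_set \<sigma> ! vertex_index \<sigma> a = a"
  unfolding vertex_index_def using bij_betw_nth_sorted_list_of_set
  by (metis bij_betw_def f_the_inv_into_f)

lemma vertex_index_nth: "i < card \<sigma> \<Longrightarrow> vertex_index \<sigma> (sorted_list_of_set \<sigma> ! i) = i"
  unfolding vertex_index_def using bij_betw_nth_sorted_list_of_set
  by (metis bij_betw_def lessThan_iff the_inv_into_f_f)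

lemma vertex_index_mono:
  assumes "a \<le> b" "a \<in> \<sigma>" "b \<in> \<sigma>"
  shows "vertex_index \<sigma> a \<le> vertex_index \<sigma> b"
proof (rule ccontr)
  assume "\<not> ?thesis"
  moreover have "sorted_wrt (<) (sorted_list_of_set \<sigma>)" by simp
  ultimately have "sorted_list_of_set \<sigma> ! vertex_index \<sigma> b < sorted_list_of_set \<sigma> ! vertex_index \<sigma> a"
    using vertex_index_less[OF assms(2)] fin by (simp add: sorted_wrt_iff_nth_less)
  then show False using nth_vertex_index assms by simp
qed

lemma vertex_index_image_eq_iff: "A \<subseteq> \<sigma> \<Longrightarrow> vertex_index \<sigma> ` A = {..<card \<sigma>} \<longleftrightarrow> A = \<sigma>"
proof
  assume A: "A \<subseteq> \<sigma>" and onto: "vertex_index \<sigma> ` A = {..<card \<sigma>}"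
  have "a \<in> A" if a: "a \<in> \<sigma>" for a
  proof -
    have "vertex_index \<sigma> a \<in> vertex_index \<sigma> ` A" using onto vertex_index_less[OF a] by simp
    then obtain b where "b \<in> A" "vertex_index \<sigma> b = vertex_index \<sigma> a" by (metis imageE)
    then show ?thesis using A a nth_vertex_index by (metis subsetD)
  qed
  with A show "A = \<sigma>" by blast
next
  assume "A = \<sigma>"
  moreover have "bij_betw (vertex_index \<sigma>) \<sigma> {..<card \<sigma>}"
    unfolding vertex_index_def by (rule bij_betw_the_inv_into[OF bij_betw_nth_sorted_list_of_set])
  ultimately show "vertex_index \<sigma> ` A = {..<card \<sigma>}" by (simp add: bij_betw_def)
qed

lemma relabel_unrelabel: "set \<gamma> \<subseteq> {..<card \<sigma>} \<Longrightarrow> relabel \<sigma> (unrelabel \<sigma> \<gamma>) = \<gamma>"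
  by (auto simp: relabel_def unrelabel_def vertex_index_nth subset_iff intro!: map_idI)

lemma unrelabel_relabel: "set \<alpha> \<subseteq> \<sigma> \<Longrightarrow> unrelabel \<sigma> (relabel \<sigma> \<alpha>) = \<alpha>"
  by (auto simp: relabel_def unrelabel_def nth_vertex_index subset_iff intro!: map_idI)

lemma relabel_simplices:
  assumes "\<alpha> \<in> simplices (faces \<sigma>) k"
  shows "relabel \<sigma> \<alpha> \<in> simplices (faces {0..card \<sigma> - 1}) k"
    and "set (relabel \<sigma> \<alpha>) = {0..card \<sigma> - 1} \<longleftrightarrow> set \<alpha> = \<sigma>"
proof -
  have \<alpha>: "length \<alpha> = Suc k" "sorted \<alpha>" "set \<alpha> \<subseteq> \<sigma>" "set \<alpha> \<noteq> {}"
    using assms by (auto simp: simplices_def faces_def)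
  then have "card \<sigma> > 0" using fin by (auto simp: card_gt_0_iff)
  then have vertices: "{0..card \<sigma> - 1} = {..<card \<sigma>}" by auto
  have "sorted (relabel \<sigma> \<alpha>)"
    unfolding relabel_def sorted_map
    by (rule sorted_wrt_mono_rel[OF _ \<alpha>(2)]) (use \<alpha>(3) vertex_index_mono in blast)
  moreover have "set (relabel \<sigma> \<alpha>) \<subseteq> {..<card \<sigma>}"
    using \<alpha> vertex_index_less by (auto simp: relabel_def)
  ultimately show "relabel \<sigma> \<alpha> \<in> simplices (faces {0..card \<sigma> - 1}) k"
    using \<alpha> vertices by (auto simp: simplices_def faces_def relabel_def)
  show "set (relabel \<sigma> \<alpha>) = {0..card \<sigma> - 1} \<longleftrightarrow> set \<alpha> = \<sigma>"
    using vertices vertex_index_image_eq_iff \<alpha>(3) by (simp add: relabel_def)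
qed

lemma unrelabel_simplices:
  assumes "\<gamma> \<in> simplices (faces {0..card \<sigma> - 1}) k" "\<sigma> \<noteq> {}"
  shows "unrelabel \<sigma> \<gamma> \<in> simplices (faces \<sigma>) k"
proof -
  have "card \<sigma> > 0" using fin assms(2) by (auto simp: card_gt_0_iff)
  then have \<gamma>: "length \<gamma> = Suc k" "sorted \<gamma>" "set \<gamma> \<subseteq> {..<card \<sigma>}" "set \<gamma> \<noteq> {}"
    using assms by (auto simp: simplices_def faces_def)
  have "sorted (unrelabel \<sigma> \<gamma>)"
    unfolding unrelabel_def sorted_map
    by (rule sorted_wrt_mono_rel[OF _ \<gamma>(2)])
      (use \<gamma>(3) fin in \<open>auto intro!: sorted_nth_mono simp: subset_iff\<close>)
  moreover have "set (unrelabel \<sigma> \<gamma>) \<subseteq> \<sigma>"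
    using \<gamma>(3) bij_betw_apply[OF bij_betw_nth_sorted_list_of_set] by (auto simp: unrelabel_def)
  ultimately show ?thesis using \<gamma> by (auto simp: simplices_def faces_def unrelabel_def)
qed

lemma sorted_list_of_set_simplex:
  assumes "\<sigma> \<noteq> {}"
  shows "sorted_list_of_set \<sigma> \<in> simplices (faces \<sigma>) (card \<sigma> - 1)"
proof -
  have "card \<sigma> > 0" using fin assms by (auto simp: card_gt_0_iff)
  then show ?thesis using fin assms by (simp add: simplices_def faces_def)
qed

lemma relabel_sorted_list_of_set:
  assumes "\<sigma> \<noteq> {}"
  shows "relabel \<sigma> (sorted_list_of_set \<sigma>) = delta_id (card \<sigma> - 1)"
proof -
  have "card \<sigma> > 0" using fin assms by (auto simp: card_gt_0_iff)
  have "sorted_list_of_set \<sigma> = unrelabel \<sigma> [0..<card \<sigma>]"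
    using fin map_nth[of "sorted_list_of_set \<sigma>"] by (simp add: unrelabel_def)
  then have "relabel \<sigma> (sorted_list_of_set \<sigma>) = [0..<card \<sigma>]"
    by (simp add: relabel_unrelabel lessThan_atLeast0)
  with \<open>card \<sigma> > 0\<close> show ?thesis by (simp add: delta_id_def)
qed

end

lemma relabel_proper_simplices:
  assumes "finite \<sigma>" "\<alpha> \<in> simplices (proper_faces \<sigma>) k"
  shows "relabel \<sigma> \<alpha> \<in> simplices (proper_faces {0..card \<sigma> - 1}) k"
  using relabel_simplices[OF assms(1)] assms(2) unfolding simplices_proper_faces by blast

lemma unrelabel_proper_simplices:
  assumes \<sigma>: "finite \<sigma>" "\<sigma> \<noteq> {}" and \<gamma>: "\<gamma> \<in> simplices (proper_faces {0..card \<sigma> - 1}) k"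
  shows "unrelabel \<sigma> \<gamma> \<in> simplices (proper_faces \<sigma>) k"
proof -
  have \<gamma>': "\<gamma> \<in> simplices (faces {0..card \<sigma> - 1}) k" "set \<gamma> \<noteq> {0..card \<sigma> - 1}"
    using \<gamma> simplices_proper_faces by blast+
  moreover have "card \<sigma> > 0" using \<sigma> by (simp add: card_gt_0_iff)
  ultimately have "set \<gamma> \<subseteq> {..<card \<sigma>}" by (auto simp: simplices_def faces_def)
  then have "relabel \<sigma> (unrelabel \<sigma> \<gamma>) = \<gamma>" using relabel_unrelabel[OF \<sigma>(1)] by blast
  moreover note u = unrelabel_simplices[OF \<sigma>(1) \<gamma>'(1) \<sigma>(2)]
  ultimately have "set (unrelabel \<sigma> \<gamma>) \<noteq> \<sigma>"
    using relabel_simplices(2)[OF \<sigma>(1) u] \<gamma>'(2) by simp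
  with u show ?thesis using simplices_proper_faces by blast
qed

locale descent_cat =
  fixes C :: "('o, 'm) cat" and Cov :: "'m set"
  assumes descent: "descent_category C Cov"
begin

abbreviation comp (infixr "\<cdot>" 55) where "g \<cdot> f \<equiv> cComp C g f"

lemma category: "category C"
  using descent by (simp add: descent_category_def)

lemma comp_hom: "f \<in> hom C a b \<Longrightarrow> g \<in> hom C b c \<Longrightarrow> g \<cdot> f \<in> hom C a c"
  using category unfolding category_def by blast

lemma comp_assoc_hom:
  "f \<in> hom C a b \<Longrightarrow> g \<in> hom C b c \<Longrightarrow> h \<in> hom C c d \<Longrightarrow> (h \<cdot> g) \<cdot> f = h \<cdot> g \<cdot> f"
  using category unfolding category_def by metis

lemma id_hom: "a \<in> cOb C \<Longrightarrow> cId C a \<in> hom C a a"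
  using category unfolding category_def by blast

lemma id_comp: "f \<in> hom C a b \<Longrightarrow> cId C b \<cdot> f = f"
  using category unfolding category_def by blast

lemma hom_obs: "f \<in> hom C a b \<Longrightarrow> a \<in> cOb C \<and> b \<in> cOb C"
  using category unfolding category_def hom_def by blast

lemma comp_reassoc_hom:
  "w \<in> hom C u a \<Longrightarrow> y \<in> hom C a b \<Longrightarrow> x \<in> hom C b c \<Longrightarrow> x \<cdot> y = z \<Longrightarrow> x \<cdot> y \<cdot> w = z \<cdot> w"
  using comp_assoc_hom[of w u a y b x c] by simp

lemma id_cover: "a \<in> cOb C \<Longrightarrow> cId C a \<in> Cov"
  using descent unfolding descent_category_def by blast

lemma comp_cover: "f \<in> Cov \<Longrightarrow> g \<in> Cov \<Longrightarrow> cDom C g = cCod C f \<Longrightarrow> g \<cdot> f \<in> Cov"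
  using descent unfolding descent_category_def by blast

lemma pullback_cover: "f \<in> Cov \<Longrightarrow> is_pullback C f g P p q \<Longrightarrow> q \<in> Cov"
  using descent unfolding descent_category_def by blast

lemma cover_cancel:
  "f \<in> cAr C \<Longrightarrow> g \<in> cAr C \<Longrightarrow> cDom C g = cCod C f \<Longrightarrow> f \<in> Cov \<Longrightarrow> g \<cdot> f \<in> Cov \<Longrightarrow> g \<in> Cov"
  using descent unfolding descent_category_def by blast

lemma terminal_exists: "\<exists>t. is_terminal C t"
  using descent by (simp add: descent_category_def has_finite_limits_def)

lemma pullback_exists:
  assumes "f \<in> hom C a c" "g \<in> hom C b c"
  obtains P p q where "is_pullback C f g P p q"
proof -
  have "has_finite_limits C" using descent by (simp add: descent_category_def)
  then have "\<exists>P p q. is_pullback C f g P p q"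
    using assms by (simp add: has_finite_limits_def hom_def)
  then show ?thesis using that by blast
qed

section \<open>Pullbacks\<close>

context
  fixes f g P p q A B Z
  assumes pb: "is_pullback C f g P p q" and f: "f \<in> hom C A Z" and g: "g \<in> hom C B Z"
begin

lemma pullback_homs: "P \<in> cOb C" "p \<in> hom C P A" "q \<in> hom C P B" "f \<cdot> p = g \<cdot> q"
proof -
  have "P \<in> cOb C \<and> p \<in> hom C P (cDom C f) \<and> q \<in> hom C P (cDom C g) \<and> f \<cdot> p = g \<cdot> q"
    using pb unfolding is_pullback_def by (elim conjE) (intro conjI)
  moreover have "cDom C f = A" "cDom C g = B" using f g by (simp_all add: hom_def)
  ultimately show "P \<in> cOb C" "p \<in> hom C P A" "q \<in> hom C P B" "f \<cdot> p = g \<cdot> q" by simp_all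
qed

lemma pullback_univ:
  assumes "U \<in> cOb C" "x \<in> hom C U A" "y \<in> hom C U B" "f \<cdot> x = g \<cdot> y"
  shows "\<exists>!u. u \<in> hom C U P \<and> p \<cdot> u = x \<and> q \<cdot> u = y"
proof -
  have "\<forall>U x y. U \<in> cOb C \<longrightarrow> x \<in> hom C U (cDom C f) \<longrightarrow> y \<in> hom C U (cDom C g) \<longrightarrow>
          f \<cdot> x = g \<cdot> y \<longrightarrow> (\<exists>!u. u \<in> hom C U P \<and> p \<cdot> u = x \<and> q \<cdot> u = y)"
    using pb unfolding is_pullback_def by (elim conjE) assumption
  moreover have "cDom C f = A" "cDom C g = B" using f g by (simp_all add: hom_def)
  ultimately show ?thesis using assms by simp
qed

lemma pullback_lift:
  assumes "x \<in> hom C U A" "y \<in> hom C U B" "f \<cdot> x = g \<cdot> y"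
  obtains u where "u \<in> hom C U P" "p \<cdot> u = x" "q \<cdot> u = y"
  using ex1_implies_ex[OF pullback_univ[OF conjunct1[OF hom_obs[OF assms(1)]] assms]] that by blast

lemma pullback_uniq:
  assumes u: "u \<in> hom C U P" and u': "u' \<in> hom C U P" and "p \<cdot> u = p \<cdot> u'" "q \<cdot> u = q \<cdot> u'"
  shows "u = u'"
proof -
  have "f \<cdot> p \<cdot> u = g \<cdot> q \<cdot> u"
    using comp_reassoc_hom[OF u pullback_homs(2) f pullback_homs(4)]
      comp_assoc_hom[OF u pullback_homs(3) g] by simp
  with u have "\<exists>!v. v \<in> hom C U P \<and> p \<cdot> v = p \<cdot> u \<and> q \<cdot> v = q \<cdot> u"
    using pullback_univ[OF conjunct1[OF hom_obs[OF u]] comp_hom[OF u pullback_homs(2)]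
        comp_hom[OF u pullback_homs(3)]] by blast
  then obtain v where "\<And>w. w \<in> hom C U P \<and> p \<cdot> w = p \<cdot> u \<and> q \<cdot> w = q \<cdot> u \<Longrightarrow> w = v"
    by (elim ex1E) blast
  then show ?thesis using assms by metis
qed

end

lemma is_pullbackI:
  assumes f: "f \<in> hom C A Z" and g: "g \<in> hom C B Z" and P: "p \<in> hom C P A" "q \<in> hom C P B"
    and sq: "f \<cdot> p = g \<cdot> q"
    and lift: "\<And>U x y. x \<in> hom C U A \<Longrightarrow> y \<in> hom C U B \<Longrightarrow> f \<cdot> x = g \<cdot> y \<Longrightarrow>
                 \<exists>u \<in> hom C U P. p \<cdot> u = x \<and> q \<cdot> u = y"
    and uniq: "\<And>U u u'. u \<in> hom C U P \<Longrightarrow> u' \<in> hom C U P \<Longrightarrow> p \<cdot> u = p \<cdot> u' \<Longrightarrow> q \<cdot> u = q \<cdot> u' \<Longrightarrow>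
                 u = u'"
  shows "is_pullback C f g P p q"
  unfolding is_pullback_def
proof (intro conjI allI impI)
  fix U x y assume "U \<in> cOb C" "x \<in> hom C U (cDom C f)" "y \<in> hom C U (cDom C g)" "f \<cdot> x = g \<cdot> y"
  then show "\<exists>!u. u \<in> hom C U P \<and> p \<cdot> u = x \<and> q \<cdot> u = y"
    using lift[of x U y] uniq[of _ U] f g by (auto simp: hom_def)
qed (use f g P sq hom_obs[OF P(1)] in \<open>simp_all add: hom_def\<close>)

lemma pullback_sym: "is_pullback C f g P p q \<Longrightarrow> is_pullback C g f P q p"
  unfolding is_pullback_def by metis

lemma pullback_paste:
  assumes right: "is_pullback C g h Q q1 q2" and left: "is_pullback C f q1 P p1 p2"
    and f: "f \<in> hom C A B" and g: "g \<in> hom C B Z" and h: "h \<in> hom C Y Z"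
  shows "is_pullback C (g \<cdot> f) h P p1 (q2 \<cdot> p2)"
proof -
  note Q = pullback_homs[OF right g h]
  note P = pullback_homs[OF left f Q(2)]
  show ?thesis
  proof (rule is_pullbackI[OF comp_hom[OF f g] h P(2) comp_hom[OF P(3) Q(3)]])
    have "(g \<cdot> f) \<cdot> p1 = g \<cdot> q1 \<cdot> p2" using comp_reassoc_hom[OF P(2) f g refl] P(4) by simp
    also have "\<dots> = h \<cdot> q2 \<cdot> p2" using comp_reassoc_hom[OF P(3) Q(2) g Q(4)] comp_assoc_hom[OF P(3) Q(3) h] by simp
    finally show "(g \<cdot> f) \<cdot> p1 = h \<cdot> q2 \<cdot> p2" .
  next
    fix U x y assume x: "x \<in> hom C U A" and y: "y \<in> hom C U Y" and eq: "(g \<cdot> f) \<cdot> x = h \<cdot> y"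
    have "g \<cdot> f \<cdot> x = h \<cdot> y" using eq comp_assoc_hom[OF x f g] by simp
    then obtain z where z: "z \<in> hom C U Q" "q1 \<cdot> z = f \<cdot> x" "q2 \<cdot> z = y"
      using pullback_lift[OF right g h comp_hom[OF x f] y] by metis
    then obtain u where u: "u \<in> hom C U P" "p1 \<cdot> u = x" "p2 \<cdot> u = z"
      using pullback_lift[OF left f Q(2) x z(1)] by metis
    then have "(q2 \<cdot> p2) \<cdot> u = y" using comp_assoc_hom[OF u(1) P(3) Q(3)] z by simp
    with u show "\<exists>u \<in> hom C U P. p1 \<cdot> u = x \<and> (q2 \<cdot> p2) \<cdot> u = y" by blast
  next
    fix U u u' assume u: "u \<in> hom C U P" and u': "u' \<in> hom C U P"
      and eq1: "p1 \<cdot> u = p1 \<cdot> u'" and eq2: "(q2 \<cdot> p2) \<cdot> u = (q2 \<cdot> p2) \<cdot> u'"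
    have "p2 \<cdot> u = p2 \<cdot> u'"
    proof (rule pullback_uniq[OF right g h comp_hom[OF u P(3)] comp_hom[OF u' P(3)]])
      show "q1 \<cdot> p2 \<cdot> u = q1 \<cdot> p2 \<cdot> u'"
        using comp_reassoc_hom[OF u P(3) Q(2) P(4)[symmetric]]
          comp_reassoc_hom[OF u' P(3) Q(2) P(4)[symmetric]]
          comp_assoc_hom[OF u P(2) f] comp_assoc_hom[OF u' P(2) f] eq1 by simp
      show "q2 \<cdot> p2 \<cdot> u = q2 \<cdot> p2 \<cdot> u'"
        using eq2 comp_assoc_hom[OF u P(3) Q(3)] comp_assoc_hom[OF u' P(3) Q(3)] by simp
    qed
    then show "u = u'" using pullback_uniq[OF left f Q(2) u u' eq1] by blast
  qed
qed

lemma pullback_cancel: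
  assumes right: "is_pullback C g h Q q1 q2" and outer: "is_pullback C (g \<cdot> f) h P p1 (q2 \<cdot> p2)"
    and p2: "p2 \<in> hom C P Q" and sq: "q1 \<cdot> p2 = f \<cdot> p1"
    and f: "f \<in> hom C A B" and g: "g \<in> hom C B Z" and h: "h \<in> hom C Y Z"
  shows "is_pullback C f q1 P p1 p2"
proof -
  note Q = pullback_homs[OF right g h]
  note P = pullback_homs[OF outer comp_hom[OF f g] h]
  show ?thesis
  proof (rule is_pullbackI[OF f Q(2) P(2) p2 sq[symmetric]])
    fix U x z assume x: "x \<in> hom C U A" and z: "z \<in> hom C U Q" and eq: "f \<cdot> x = q1 \<cdot> z"
    have "(g \<cdot> f) \<cdot> x = g \<cdot> q1 \<cdot> z" using comp_assoc_hom[OF x f g] eq by simp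
    also have "\<dots> = h \<cdot> q2 \<cdot> z" using comp_reassoc_hom[OF z Q(2) g Q(4)] comp_assoc_hom[OF z Q(3) h] by simp
    finally obtain u where u: "u \<in> hom C U P" "p1 \<cdot> u = x" "(q2 \<cdot> p2) \<cdot> u = q2 \<cdot> z"
      using pullback_lift[OF outer comp_hom[OF f g] h x comp_hom[OF z Q(3)]] by metis
    have "p2 \<cdot> u = z"
    proof (rule pullback_uniq[OF right g h comp_hom[OF u(1) p2] z])
      show "q1 \<cdot> p2 \<cdot> u = q1 \<cdot> z"
        using comp_reassoc_hom[OF u(1) p2 Q(2) sq] comp_assoc_hom[OF u(1) P(2) f] u(2) eq by simp
      show "q2 \<cdot> p2 \<cdot> u = q2 \<cdot> z"
        using u(3) comp_assoc_hom[OF u(1) p2 Q(3)] by simp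
    qed
    then show "\<exists>u \<in> hom C U P. p1 \<cdot> u = x \<and> p2 \<cdot> u = z" using u by blast
  next
    fix U u u' assume u: "u \<in> hom C U P" and u': "u' \<in> hom C U P"
      and eq1: "p1 \<cdot> u = p1 \<cdot> u'" and eq2: "p2 \<cdot> u = p2 \<cdot> u'"
    show "u = u'"
    proof (rule pullback_uniq[OF outer comp_hom[OF f g] h u u' eq1])
      show "(q2 \<cdot> p2) \<cdot> u = (q2 \<cdot> p2) \<cdot> u'"
        using eq2 comp_assoc_hom[OF u p2 Q(3)] comp_assoc_hom[OF u' p2 Q(3)] by simp
    qed
  qed
qed

text \<open>An isomorphism is a pullback of the identity along itself.\<close>
lemma iso_cover:
  assumes i: "i \<in> hom C A B" and j: "j \<in> hom C B A" and "j \<cdot> i = cId C A" "i \<cdot> j = cId C B"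
  shows "i \<in> Cov"
proof -
  have B: "B \<in> cOb C" using hom_obs[OF i] by blast
  have "is_pullback C (cId C B) (cId C B) A i i"
  proof (rule is_pullbackI[OF id_hom[OF B] id_hom[OF B] i i])
    fix U x y assume x: "x \<in> hom C U B" and y: "y \<in> hom C U B" and "cId C B \<cdot> x = cId C B \<cdot> y"
    then have "x = y" using id_comp[OF x] id_comp[OF y] by simp
    moreover have "i \<cdot> j \<cdot> x = x" using comp_reassoc_hom[OF x j i assms(4)] id_comp[OF x] by simp
    ultimately show "\<exists>u \<in> hom C U A. i \<cdot> u = x \<and> i \<cdot> u = y" using comp_hom[OF x j] by blast
  next
    fix U u u' assume u: "u \<in> hom C U A" and u': "u' \<in> hom C U A" and "i \<cdot> u = i \<cdot> u'"
    then have "j \<cdot> i \<cdot> u = j \<cdot> i \<cdot> u'" by simp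
    then show "u = u'"
      using comp_reassoc_hom[OF u i j assms(3)] comp_reassoc_hom[OF u' i j assms(3)]
        id_comp[OF u] id_comp[OF u'] by simp
  qed simp
  then show ?thesis using pullback_cover id_cover B by blast
qed

text \<open>A map of pullbacks \<open>A\<^sub>0 \<times>\<^bsub>D\<^sub>A\<^esub> E\<^sub>A \<rightarrow> B\<^sub>0 \<times>\<^bsub>D\<^sub>B\<^esub> E\<^sub>B\<close> is a cover if \<open>A\<^sub>0 \<rightarrow> B\<^sub>0\<close> and the relative map
  \<open>E\<^sub>A \<rightarrow> D\<^sub>A \<times>\<^bsub>D\<^sub>B\<^esub> E\<^sub>B\<close> are: it factors as a pullback of the latter followed by a pullback of the
  former, by pasting and cancelling squares.\<close>
lemma pullback_map_cover:
  assumes pbA: "is_pullback C a0 aE A pA0 pAE" and pbB: "is_pullback C b0 bE B pB0 pBE"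
    and a: "a0 \<in> hom C A0 DA" "aE \<in> hom C EA DA" and b: "b0 \<in> hom C B0 DB" "bE \<in> hom C EB DB"
    and w0: "w0 \<in> hom C A0 B0" and wD: "wD \<in> hom C DA DB" and wE: "wE \<in> hom C EA EB"
    and w: "w \<in> hom C A B"
    and sq0: "b0 \<cdot> w0 = wD \<cdot> a0" and sqE: "bE \<cdot> wE = wD \<cdot> aE"
    and w_0: "pB0 \<cdot> w = w0 \<cdot> pA0" and w_E: "pBE \<cdot> w = wE \<cdot> pAE"
    and w0_cover: "w0 \<in> Cov"
    and latching: "\<And>R l1 l2 s. is_pullback C wD bE R l1 l2 \<Longrightarrow> s \<in> hom C EA R \<Longrightarrow>
                     l1 \<cdot> s = aE \<Longrightarrow> l2 \<cdot> s = wE \<Longrightarrow> s \<in> Cov"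
  shows "w \<in> Cov"
proof -
  note pA = pullback_homs[OF pbA a] and pB = pullback_homs[OF pbB b]
  obtain P p1 p2 where pbP: "is_pullback C w0 pB0 P p1 p2" using pullback_exists[OF w0 pB(2)] .
  note p = pullback_homs[OF pbP w0 pB(2)]
  obtain c where c: "c \<in> hom C A P" "p1 \<cdot> c = pA0" "p2 \<cdot> c = w"
    by (rule pullback_lift[OF pbP w0 pB(2) pA(2) w w_0[symmetric]])
  obtain R l1 l2 where pbR: "is_pullback C wD bE R l1 l2" using pullback_exists[OF wD b(2)] .
  note l = pullback_homs[OF pbR wD b(2)]
  obtain s where s: "s \<in> hom C EA R" "l1 \<cdot> s = aE" "l2 \<cdot> s = wE"
    by (rule pullback_lift[OF pbR wD b(2) a(2) wE sqE[symmetric]])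
  have pbPB: "is_pullback C (wD \<cdot> a0) bE P p1 (pBE \<cdot> p2)"
    using pullback_paste[OF pbB pbP w0 b] sq0 by simp
  have "wD \<cdot> a0 \<cdot> p1 = bE \<cdot> pBE \<cdot> p2"
    using pullback_homs(4)[OF pbPB comp_hom[OF a(1) wD] b(2)]
      comp_assoc_hom[OF p(2) a(1) wD] comp_assoc_hom[OF p(3) pB(3) b(2)] by simp
  then obtain t where t: "t \<in> hom C P R" "l1 \<cdot> t = a0 \<cdot> p1" "l2 \<cdot> t = pBE \<cdot> p2"
    by (rule pullback_lift[OF pbR wD b(2) comp_hom[OF p(2) a(1)] comp_hom[OF p(3) pB(3)]])
  have pbPR: "is_pullback C a0 l1 P p1 t"
    using pullback_cancel[OF pbR _ t(1) t(2) a(1) wD b(2)] pbPB t(3) by simp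
  have "t \<cdot> c = s \<cdot> pAE"
  proof (rule pullback_uniq[OF pbR wD b(2) comp_hom[OF c(1) t(1)] comp_hom[OF pA(3) s(1)]])
    show "l1 \<cdot> t \<cdot> c = l1 \<cdot> s \<cdot> pAE"
      using comp_reassoc_hom[OF c(1) t(1) l(2) t(2)] comp_assoc_hom[OF c(1) p(2) a(1)] c(2)
        pA(4) comp_reassoc_hom[OF pA(3) s(1) l(2) s(2)] by simp
    show "l2 \<cdot> t \<cdot> c = l2 \<cdot> s \<cdot> pAE"
      using comp_reassoc_hom[OF c(1) t(1) l(3) t(3)] comp_assoc_hom[OF c(1) p(3) pB(3)] c(3)
        w_E comp_reassoc_hom[OF pA(3) s(1) l(3) s(3)] by simp
  qed
  then have "is_pullback C s t A pAE c"
    using pullback_cancel[OF pullback_sym[OF pbPR] _ c(1) _ s(1) l(2) a(1)]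
      pullback_sym[OF pbA] s(2) c(2) by simp
  then have "c \<in> Cov" using pullback_cover[OF latching[OF pbR s]] by blast
  then show ?thesis
    using comp_cover[OF _ pullback_cover[OF w0_cover pbP]] c p by (auto simp: hom_def)
qed

lemma sob_obj: "simplicial_object C X \<Longrightarrow> sob X n \<in> cOb C"
  unfolding simplicial_object_def by blast

lemma sact_hom: "simplicial_object C X \<Longrightarrow> delta k n \<theta> \<Longrightarrow> sact X k n \<theta> \<in> hom C (sob X n) (sob X k)"
  unfolding simplicial_object_def by blast

lemma sact_delta_comp: "simplicial_object C X \<Longrightarrow> delta k m \<phi> \<Longrightarrow> delta m n \<theta> \<Longrightarrow>
    sact X k n (delta_comp \<theta> \<phi>) = sact X k m \<phi> \<cdot> sact X m n \<theta>"
  unfolding simplicial_object_def by blast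

lemma sact_delta_id: "simplicial_object C X \<Longrightarrow> sact X m m (delta_id m) = cId C (sob X m)"
  unfolding simplicial_object_def by blast

lemma smor_hom: "smor C X Y f \<Longrightarrow> f n \<in> hom C (sob X n) (sob Y n)"
  unfolding smor_def by blast

lemma smor_natural: "smor C X Y f \<Longrightarrow> delta k n \<theta> \<Longrightarrow> f k \<cdot> sact X k n \<theta> = sact Y k n \<theta> \<cdot> f n"
  unfolding smor_def by blast

lemma smor_smor_comp:
  assumes X: "simplicial_object C X" and Y: "simplicial_object C Y" and Z: "simplicial_object C Z"
    and f: "smor C X Y f" and g: "smor C Y Z g"
  shows "smor C X Z (smor_comp C g f)"
  unfolding smor_def smor_comp_def
proof (intro conjI allI impI)
  fix n show "g n \<cdot> f n \<in> hom C (sob X n) (sob Z n)" using comp_hom[OF smor_hom[OF f] smor_hom[OF g]] .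
next
  fix k n \<theta> assume \<theta>: "delta k n \<theta>"
  note fn = smor_hom[OF f, of n]
  have "(g k \<cdot> f k) \<cdot> sact X k n \<theta> = g k \<cdot> sact Y k n \<theta> \<cdot> f n"
    using comp_assoc_hom[OF sact_hom[OF X \<theta>] smor_hom[OF f] smor_hom[OF g]] smor_natural[OF f \<theta>] by simp
  also have "\<dots> = sact Z k n \<theta> \<cdot> g n \<cdot> f n"
    using comp_reassoc_hom[OF fn sact_hom[OF Y \<theta>] smor_hom[OF g] smor_natural[OF g \<theta>]]
      comp_assoc_hom[OF fn smor_hom[OF g] sact_hom[OF Z \<theta>]] by simp
  finally show "(g k \<cdot> f k) \<cdot> sact X k n \<theta> = sact Z k n \<theta> \<cdot> g n \<cdot> f n" .
qed

lemma smap_into_hom: "smap_into C X U T Ta h \<Longrightarrow> x \<in> T k \<Longrightarrow> h k x \<in> hom C U (sob X k)"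
  unfolding smap_into_def by blast

lemma smap_into_act:
  "smap_into C X U T Ta h \<Longrightarrow> delta j k \<phi> \<Longrightarrow> x \<in> T k \<Longrightarrow> h j (Ta j k \<phi> x) = sact X j k \<phi> \<cdot> h k x"
  unfolding smap_into_def by blast

lemma smap_into_mono: "smap_into C X U T Ta h \<Longrightarrow> (\<And>k. T' k \<subseteq> T k) \<Longrightarrow> smap_into C X U T' Ta h"
  unfolding smap_into_def by blast

lemma smap_into_empty: "smap_into C X U (simplices {}) Ta h"
  by (simp add: smap_into_def simplices_def)

lemma smap_into_comp:
  assumes X: "simplicial_object C X" and e: "smap_into C X M T Ta e" and u: "u \<in> hom C U M"
  shows "smap_into C X U T Ta (\<lambda>k x. e k x \<cdot> u)"
  unfolding smap_into_def
proof (intro conjI allI impI)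
  fix k x assume "x \<in> T k"
  then show "e k x \<cdot> u \<in> hom C U (sob X k)" using comp_hom[OF u smap_into_hom[OF e]] by blast
next
  fix j k \<phi> x assume \<phi>: "delta j k \<phi>" and x: "x \<in> T k"
  show "e j (Ta j k \<phi> x) \<cdot> u = sact X j k \<phi> \<cdot> e k x \<cdot> u"
    using smap_into_act[OF e \<phi> x] comp_assoc_hom[OF u smap_into_hom[OF e x] sact_hom[OF X \<phi>]]
    by simp
qed

lemma smap_into_smor:
  assumes X: "simplicial_object C X" and Y: "simplicial_object C Y" and f: "smor C X Y f"
    and h: "smap_into C X U T Ta h"
  shows "smap_into C Y U T Ta (\<lambda>k x. f k \<cdot> h k x)"
  unfolding smap_into_def
proof (intro conjI allI impI)
  fix k x assume "x \<in> T k"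
  then show "f k \<cdot> h k x \<in> hom C U (sob Y k)"
    using comp_hom[OF smap_into_hom[OF h] smor_hom[OF f]] by blast
next
  fix j k \<phi> x assume \<phi>: "delta j k \<phi>" and x: "x \<in> T k"
  note hx = smap_into_hom[OF h x]
  have "f j \<cdot> h j (Ta j k \<phi> x) = (f j \<cdot> sact X j k \<phi>) \<cdot> h k x"
    using smap_into_act[OF h \<phi> x] comp_assoc_hom[OF hx sact_hom[OF X \<phi>] smor_hom[OF f]] by simp
  also have "\<dots> = sact Y j k \<phi> \<cdot> f k \<cdot> h k x"
    using smor_natural[OF f \<phi>] comp_assoc_hom[OF hx smor_hom[OF f] sact_hom[OF Y \<phi>]] by simp
  finally show "f j \<cdot> h j (Ta j k \<phi> x) = sact Y j k \<phi> \<cdot> f k \<cdot> h k x" .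
qed

lemma smap_into_reindex:
  assumes h: "smap_into C X U (simplices F) simplex_act h"
    and g: "\<And>k \<gamma>. \<gamma> \<in> simplices G k \<Longrightarrow> map g \<gamma> \<in> simplices F k"
  shows "smap_into C X U (simplices G) simplex_act (\<lambda>k \<gamma>. h k (map g \<gamma>))"
  unfolding smap_into_def
proof (intro conjI allI impI)
  fix k \<gamma> assume "\<gamma> \<in> simplices G k"
  then show "h k (map g \<gamma>) \<in> hom C U (sob X k)" using smap_into_hom[OF h g] by blast
next
  fix j k \<phi> \<gamma> assume \<phi>: "delta j k \<phi>" and \<gamma>: "\<gamma> \<in> simplices G k"
  then have "set \<phi> \<subseteq> {..<length \<gamma>}" using delta_imp_subset by (simp add: simplices_def)
  then have "map g (simplex_act j k \<phi> \<gamma>) = simplex_act j k \<phi> (map g \<gamma>)"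
    by (auto simp: simplex_act_def delta_comp_def subset_iff)
  then show "h j (map g (simplex_act j k \<phi> \<gamma>)) = sact X j k \<phi> \<cdot> h k (map g \<gamma>)"
    using smap_into_act[OF h \<phi> g[OF \<gamma>]] by simp
qed

text \<open>The Yoneda map: an \<open>n\<close>-simplex of \<open>X\<close> is a simplicial map \<open>\<Delta>^n \<rightarrow> Hom(X\<^sub>n, X)\<close>.\<close>
lemma smap_into_sact:
  assumes X: "simplicial_object C X" and F: "F \<subseteq> faces {0..n}"
  shows "smap_into C X (sob X n) (simplices F) simplex_act (\<lambda>k \<alpha>. sact X k n \<alpha>)"
  unfolding smap_into_def
proof (intro conjI allI impI)
  fix k \<alpha> assume "\<alpha> \<in> simplices F k"
  then have "delta k n \<alpha>" using F simplices_mono delta_iff_simplices by blast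
  then show "sact X k n \<alpha> \<in> hom C (sob X n) (sob X k)" using X sact_hom by blast
next
  fix j k \<phi> \<alpha> assume \<phi>: "delta j k \<phi>" and "\<alpha> \<in> simplices F k"
  then have "delta k n \<alpha>" using F simplices_mono delta_iff_simplices by blast
  then show "sact X j n (simplex_act j k \<phi> \<alpha>) = sact X j k \<phi> \<cdot> sact X k n \<alpha>"
    using sact_delta_comp[OF X \<phi>] by (simp add: simplex_act_def)
qed

end

section \<open>Mapping objects\<close>

text \<open>\<open>M\<close> with the universal family \<open>e\<close> represents \<open>Map(F, X)\<close> for the simplicial set of a complex \<open>F\<close>.\<close>
definition is_Map :: "('o, 'm) cat \<Rightarrow> ('o, 'm) sobj \<Rightarrow> nat set set \<Rightarrow> 'o \<Rightarrow> (nat \<Rightarrow> nat list \<Rightarrow> 'm) \<Rightarrow> bool"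
  where "is_Map C X F M e \<longleftrightarrow> M \<in> cOb C \<and> smap_into C X M (simplices F) simplex_act e \<and>
    (\<forall>U d. U \<in> cOb C \<longrightarrow> smap_into C X U (simplices F) simplex_act d \<longrightarrow>
       (\<exists>!u. u \<in> hom C U M \<and> (\<forall>k \<alpha>. \<alpha> \<in> simplices F k \<longrightarrow> d k \<alpha> = cComp C (e k \<alpha>) u)))"

definition glue :: "nat set set \<Rightarrow> (nat \<Rightarrow> nat list \<Rightarrow> 'm) \<Rightarrow> (nat \<Rightarrow> nat list \<Rightarrow> 'm) \<Rightarrow> nat \<Rightarrow> nat list \<Rightarrow> 'm"
  where "glue F h h' k \<alpha> = (if set \<alpha> \<in> F then h k \<alpha> else h' k \<alpha>)"

context descent_cat
begin

lemma is_Map_obj: "is_Map C X F M e \<Longrightarrow> M \<in> cOb C"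
  by (simp add: is_Map_def)

lemma is_Map_smap: "is_Map C X F M e \<Longrightarrow> smap_into C X M (simplices F) simplex_act e"
  by (simp add: is_Map_def)

lemma is_Map_hom: "is_Map C X F M e \<Longrightarrow> \<alpha> \<in> simplices F k \<Longrightarrow> e k \<alpha> \<in> hom C M (sob X k)"
  using smap_into_hom[OF is_Map_smap] .

lemma is_Map_lift:
  assumes "is_Map C X F M e" "U \<in> cOb C" "smap_into C X U (simplices F) simplex_act d"
  obtains u where "u \<in> hom C U M" "\<And>k \<alpha>. \<alpha> \<in> simplices F k \<Longrightarrow> e k \<alpha> \<cdot> u = d k \<alpha>"
proof -
  have "\<exists>u. u \<in> hom C U M \<and> (\<forall>k \<alpha>. \<alpha> \<in> simplices F k \<longrightarrow> d k \<alpha> = e k \<alpha> \<cdot> u)"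
    using assms unfolding is_Map_def by (metis (no_types, lifting))
  then show ?thesis using that by metis
qed

lemma is_Map_uniq:
  assumes X: "simplicial_object C X" and M: "is_Map C X F M e"
    and u: "u \<in> hom C U M" and u': "u' \<in> hom C U M"
    and eq: "\<And>k \<alpha>. \<alpha> \<in> simplices F k \<Longrightarrow> e k \<alpha> \<cdot> u = e k \<alpha> \<cdot> u'"
  shows "u = u'"
proof -
  have "\<exists>!v. v \<in> hom C U M \<and> (\<forall>k \<alpha>. \<alpha> \<in> simplices F k \<longrightarrow> e k \<alpha> \<cdot> u = e k \<alpha> \<cdot> v)"
    using M conjunct1[OF hom_obs[OF u]] smap_into_comp[OF X is_Map_smap[OF M] u]
    unfolding is_Map_def by blast
  then show ?thesis using u u' eq by blast
qed

lemma is_MapI: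
  assumes M: "M \<in> cOb C" and e: "smap_into C X M (simplices F) simplex_act e"
    and lift: "\<And>U d. U \<in> cOb C \<Longrightarrow> smap_into C X U (simplices F) simplex_act d \<Longrightarrow>
                 \<exists>u \<in> hom C U M. \<forall>k \<alpha>. \<alpha> \<in> simplices F k \<longrightarrow> e k \<alpha> \<cdot> u = d k \<alpha>"
    and uniq: "\<And>U u u'. u \<in> hom C U M \<Longrightarrow> u' \<in> hom C U M \<Longrightarrow>
                 (\<And>k \<alpha>. \<alpha> \<in> simplices F k \<Longrightarrow> e k \<alpha> \<cdot> u = e k \<alpha> \<cdot> u') \<Longrightarrow> u = u'"
  shows "is_Map C X F M e"
  unfolding is_Map_def
proof (intro conjI allI impI M e)
  fix U d assume "U \<in> cOb C" "smap_into C X U (simplices F) simplex_act d"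
  then obtain u where u: "u \<in> hom C U M" "\<forall>k \<alpha>. \<alpha> \<in> simplices F k \<longrightarrow> e k \<alpha> \<cdot> u = d k \<alpha>"
    using lift by blast
  show "\<exists>!u. u \<in> hom C U M \<and> (\<forall>k \<alpha>. \<alpha> \<in> simplices F k \<longrightarrow> d k \<alpha> = e k \<alpha> \<cdot> u)"
  proof (rule ex1I[of _ u])
    fix u' assume "u' \<in> hom C U M \<and> (\<forall>k \<alpha>. \<alpha> \<in> simplices F k \<longrightarrow> d k \<alpha> = e k \<alpha> \<cdot> u')"
    then show "u' = u" using uniq[of u' U u] u by simp
  qed (use u in simp)
qed

lemma is_Map_restriction:
  assumes "is_Map C X G M e" "is_Map C X F N d" "\<And>k. simplices F k \<subseteq> simplices G k"
  obtains r where "r \<in> hom C M N" "\<And>k \<alpha>. \<alpha> \<in> simplices F k \<Longrightarrow> d k \<alpha> \<cdot> r = e k \<alpha>"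
  using is_Map_lift[OF assms(2) is_Map_obj[OF assms(1)] smap_into_mono[OF is_Map_smap[OF assms(1)] assms(3)]]
  by blast

lemma is_Map_empty: "is_terminal C t \<Longrightarrow> is_Map C X {} t e"
  unfolding is_Map_def is_terminal_def smap_into_def by (auto simp: simplices_def)

text \<open>The mapping object of a single face with \<open>m + 1\<close> vertices is \<open>X\<^sub>m\<close>, by the Yoneda lemma.\<close>
lemma is_Map_faces:
  assumes X: "simplicial_object C X" and \<sigma>: "finite \<sigma>" "\<sigma> \<noteq> {}"
  shows "is_Map C X (faces \<sigma>) (sob X (card \<sigma> - 1)) (\<lambda>k \<alpha>. sact X k (card \<sigma> - 1) (relabel \<sigma> \<alpha>))"
proof -
  let ?m = "card \<sigma> - 1" and ?\<iota> = "sorted_list_of_set \<sigma>"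
  note \<iota> = sorted_list_of_set_simplex[OF \<sigma>]
  show ?thesis
  proof (rule is_MapI[OF sob_obj[OF X]])
    show e: "smap_into C X (sob X ?m) (simplices (faces \<sigma>)) simplex_act (\<lambda>k \<alpha>. sact X k ?m (relabel \<sigma> \<alpha>))"
      unfolding relabel_def
      by (rule smap_into_reindex[OF smap_into_sact[OF X order_refl]])
        (use relabel_simplices(1)[OF \<sigma>(1)] in \<open>simp add: relabel_def\<close>)
    fix U d assume U: "U \<in> cOb C" and d: "smap_into C X U (simplices (faces \<sigma>)) simplex_act d"
    have "sact X k ?m (relabel \<sigma> \<alpha>) \<cdot> d ?m ?\<iota> = d k \<alpha>" if \<alpha>: "\<alpha> \<in> simplices (faces \<sigma>) k" for k \<alpha>
    proof -
      have "delta k ?m (relabel \<sigma> \<alpha>)"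
        using relabel_simplices(1)[OF \<sigma>(1) \<alpha>] delta_iff_simplices by blast
      moreover have "simplex_act k ?m (relabel \<sigma> \<alpha>) ?\<iota> = \<alpha>"
        using unrelabel_relabel[OF \<sigma>(1)] \<alpha>
        by (auto simp: simplex_act_def delta_comp_def unrelabel_def relabel_def simplices_def faces_def)
      ultimately show ?thesis using smap_into_act[OF d _ \<iota>] by metis
    qed
    then show "\<exists>u \<in> hom C U (sob X ?m). \<forall>k \<alpha>. \<alpha> \<in> simplices (faces \<sigma>) k \<longrightarrow>
                 sact X k ?m (relabel \<sigma> \<alpha>) \<cdot> u = d k \<alpha>"
      using smap_into_hom[OF d \<iota>] by blast
  next
    fix U u u' assume u: "u \<in> hom C U (sob X ?m)" and u': "u' \<in> hom C U (sob X ?m)"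
      and "\<And>k \<alpha>. \<alpha> \<in> simplices (faces \<sigma>) k \<Longrightarrow>
             sact X k ?m (relabel \<sigma> \<alpha>) \<cdot> u = sact X k ?m (relabel \<sigma> \<alpha>) \<cdot> u'"
    from this(3)[OF \<iota>] show "u = u'"
      using relabel_sorted_list_of_set[OF \<sigma>] sact_delta_id[OF X] id_comp[OF u] id_comp[OF u'] by simp
  qed
qed

section \<open>Attaching a face\<close>

context
  fixes X :: "('o, 'm) sobj" and F0 :: "nat set set" and \<sigma> :: "nat set"
  assumes X: "simplicial_object C X" and F0: "simplicial_complex F0"
    and \<sigma>: "finite \<sigma>" and boundary: "proper_faces \<sigma> \<subseteq> F0" and new: "\<sigma> \<notin> F0"
begin

lemma simplices_boundary_left: "\<alpha> \<in> simplices (proper_faces \<sigma>) k \<Longrightarrow> \<alpha> \<in> simplices F0 k"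
  using simplices_mono[OF boundary] by blast

lemma simplices_boundary_right: "\<alpha> \<in> simplices (proper_faces \<sigma>) k \<Longrightarrow> \<alpha> \<in> simplices (faces \<sigma>) k"
  using simplices_proper_faces_subset by blast

lemma simplices_boundary_inter:
  "\<alpha> \<in> simplices F0 k \<Longrightarrow> \<alpha> \<in> simplices (faces \<sigma>) k \<Longrightarrow> \<alpha> \<in> simplices (proper_faces \<sigma>) k"
  using new by (auto simp: simplices_def faces_def proper_faces_def)

lemma simplices_union_left: "\<alpha> \<in> simplices F0 k \<Longrightarrow> \<alpha> \<in> simplices (F0 \<union> faces \<sigma>) k"
  and simplices_union_right: "\<alpha> \<in> simplices (faces \<sigma>) k \<Longrightarrow> \<alpha> \<in> simplices (F0 \<union> faces \<sigma>) k"
  using simplices_mono[of F0 "F0 \<union> faces \<sigma>"] simplices_mono[of "faces \<sigma>" "F0 \<union> faces \<sigma>"] by blast+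

lemma glue_left: "\<alpha> \<in> simplices F0 k \<Longrightarrow> glue F0 h h' k \<alpha> = h k \<alpha>"
  by (simp add: glue_def simplices_def)

context
  fixes h h' :: "nat \<Rightarrow> nat list \<Rightarrow> 'm"
  assumes agree: "\<forall>k. \<forall>\<alpha> \<in> simplices (proper_faces \<sigma>) k. h k \<alpha> = h' k \<alpha>"
begin

lemma glue_right: "\<alpha> \<in> simplices (faces \<sigma>) k \<Longrightarrow> glue F0 h h' k \<alpha> = h' k \<alpha>"
  using agree simplices_boundary_inter by (auto simp: glue_def simplices_def)

lemma smap_into_glue:
  assumes h: "smap_into C X U (simplices F0) simplex_act h"
    and h': "smap_into C X U (simplices (faces \<sigma>)) simplex_act h'"
  shows "smap_into C X U (simplices (F0 \<union> faces \<sigma>)) simplex_act (glue F0 h h')"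
  unfolding smap_into_def
proof (intro conjI allI impI)
  fix k \<alpha> assume "\<alpha> \<in> simplices (F0 \<union> faces \<sigma>) k"
  then show "glue F0 h h' k \<alpha> \<in> hom C U (sob X k)"
    by (cases rule: simplices_Un_cases) (simp_all add: glue_def smap_into_hom[OF h] smap_into_hom[OF h'])
next
  fix j k \<phi> \<alpha> assume \<phi>: "delta j k \<phi>" and \<alpha>: "\<alpha> \<in> simplices (F0 \<union> faces \<sigma>) k"
  from \<alpha> show "glue F0 h h' j (simplex_act j k \<phi> \<alpha>) = sact X j k \<phi> \<cdot> glue F0 h h' k \<alpha>"
  proof (cases rule: simplices_Un_cases)
    case 1
    then show ?thesis
      using smap_into_act[OF h \<phi> 1(2)] simplices_act[OF F0 1(2) \<phi>] by (simp add: glue_left)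
  next
    case 2
    then show ?thesis
      using smap_into_act[OF h' \<phi>] simplices_act[OF simplicial_complex_faces[OF \<sigma>] _ \<phi>] glue_right
      by (simp add: glue_def)
  qed
qed

end

text \<open>Fix \<open>Map(F\<^sub>0, X)\<close>, \<open>Map(\<sigma>, X)\<close> and \<open>Map(\<partial>\<sigma>, X)\<close> together with their restriction maps to
  \<open>Map(\<partial>\<sigma>, X)\<close>; then \<open>Map(F\<^sub>0 \<union> \<sigma>, X)\<close> is their pullback.\<close>
context
  fixes A0 E D :: 'o and a0 e d :: "nat \<Rightarrow> nat list \<Rightarrow> 'm" and r0 rE :: 'm
  assumes A0: "is_Map C X F0 A0 a0" and E: "is_Map C X (faces \<sigma>) E e"
    and D: "is_Map C X (proper_faces \<sigma>) D d"
    and r0: "r0 \<in> hom C A0 D" "\<And>k \<alpha>. \<alpha> \<in> simplices (proper_faces \<sigma>) k \<Longrightarrow> d k \<alpha> \<cdot> r0 = a0 k \<alpha>"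
    and rE: "rE \<in> hom C E D" "\<And>k \<alpha>. \<alpha> \<in> simplices (proper_faces \<sigma>) k \<Longrightarrow> d k \<alpha> \<cdot> rE = e k \<alpha>"
begin

lemma restrictions_agree:
  assumes x: "x \<in> hom C U A0" and y: "y \<in> hom C U E" and eq: "r0 \<cdot> x = rE \<cdot> y"
    and \<alpha>: "\<alpha> \<in> simplices (proper_faces \<sigma>) k"
  shows "a0 k \<alpha> \<cdot> x = e k \<alpha> \<cdot> y"
proof -
  have "a0 k \<alpha> \<cdot> x = d k \<alpha> \<cdot> r0 \<cdot> x"
    using comp_reassoc_hom[OF x r0(1) is_Map_hom[OF D \<alpha>] r0(2)[OF \<alpha>]] by simp
  also have "\<dots> = e k \<alpha> \<cdot> y"
    using comp_reassoc_hom[OF y rE(1) is_Map_hom[OF D \<alpha>] rE(2)[OF \<alpha>]] eq by simp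
  finally show ?thesis .
qed

context
  fixes Q :: 'o and q0 q1 :: 'm
  assumes pb: "is_pullback C r0 rE Q q0 q1"
begin

private lemmas q = pullback_homs[OF pb r0(1) rE(1)]

private lemma agree: "\<forall>k. \<forall>\<alpha> \<in> simplices (proper_faces \<sigma>) k. a0 k \<alpha> \<cdot> q0 = e k \<alpha> \<cdot> q1"
  using restrictions_agree[OF q(2,3,4)] by blast

private lemma glue_lift:
  assumes U: "U \<in> cOb C" and g: "smap_into C X U (simplices (F0 \<union> faces \<sigma>)) simplex_act g"
  shows "\<exists>u \<in> hom C U Q. \<forall>k \<alpha>. \<alpha> \<in> simplices (F0 \<union> faces \<sigma>) k \<longrightarrow>
           glue F0 (\<lambda>k \<alpha>. a0 k \<alpha> \<cdot> q0) (\<lambda>k \<alpha>. e k \<alpha> \<cdot> q1) k \<alpha> \<cdot> u = g k \<alpha>"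
proof -
  obtain x where x: "x \<in> hom C U A0" "\<And>k \<alpha>. \<alpha> \<in> simplices F0 k \<Longrightarrow> a0 k \<alpha> \<cdot> x = g k \<alpha>"
    using is_Map_lift[OF A0 U smap_into_mono[OF g]] simplices_union_left by blast
  obtain y where y: "y \<in> hom C U E" "\<And>k \<alpha>. \<alpha> \<in> simplices (faces \<sigma>) k \<Longrightarrow> e k \<alpha> \<cdot> y = g k \<alpha>"
    using is_Map_lift[OF E U smap_into_mono[OF g]] simplices_union_right by blast
  have "r0 \<cdot> x = rE \<cdot> y"
  proof (rule is_Map_uniq[OF X D comp_hom[OF x(1) r0(1)] comp_hom[OF y(1) rE(1)]])
    fix k \<alpha> assume \<alpha>: "\<alpha> \<in> simplices (proper_faces \<sigma>) k"
    show "d k \<alpha> \<cdot> r0 \<cdot> x = d k \<alpha> \<cdot> rE \<cdot> y"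
      using comp_reassoc_hom[OF x(1) r0(1) is_Map_hom[OF D \<alpha>] r0(2)[OF \<alpha>]]
        comp_reassoc_hom[OF y(1) rE(1) is_Map_hom[OF D \<alpha>] rE(2)[OF \<alpha>]]
        x(2)[OF simplices_boundary_left[OF \<alpha>]] y(2)[OF simplices_boundary_right[OF \<alpha>]] by simp
  qed
  then obtain u where u: "u \<in> hom C U Q" "q0 \<cdot> u = x" "q1 \<cdot> u = y"
    using pullback_lift[OF pb r0(1) rE(1) x(1) y(1)] by metis
  have "glue F0 (\<lambda>k \<alpha>. a0 k \<alpha> \<cdot> q0) (\<lambda>k \<alpha>. e k \<alpha> \<cdot> q1) k \<alpha> \<cdot> u = g k \<alpha>"
    if "\<alpha> \<in> simplices (F0 \<union> faces \<sigma>) k" for k \<alpha>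
    using that
  proof (cases rule: simplices_Un_cases)
    case 1
    then show ?thesis
      using comp_assoc_hom[OF u(1) q(2) is_Map_hom[OF A0 1(2)]] u(2) x(2)[OF 1(2)]
      by (simp add: glue_left)
  next
    case 2
    then show ?thesis
      using comp_assoc_hom[OF u(1) q(3) is_Map_hom[OF E 2(2)]] u(3) y(2)[OF 2(2)]
      by (simp add: glue_right[OF agree])
  qed
  then show ?thesis using u(1) by blast
qed

private lemma glue_uniq:
  assumes u: "u \<in> hom C U Q" and u': "u' \<in> hom C U Q"
    and eq: "\<And>k \<alpha>. \<alpha> \<in> simplices (F0 \<union> faces \<sigma>) k \<Longrightarrow>
      glue F0 (\<lambda>k \<alpha>. a0 k \<alpha> \<cdot> q0) (\<lambda>k \<alpha>. e k \<alpha> \<cdot> q1) k \<alpha> \<cdot> u =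
      glue F0 (\<lambda>k \<alpha>. a0 k \<alpha> \<cdot> q0) (\<lambda>k \<alpha>. e k \<alpha> \<cdot> q1) k \<alpha> \<cdot> u'"
  shows "u = u'"
proof (rule pullback_uniq[OF pb r0(1) rE(1) u u'])
  show "q0 \<cdot> u = q0 \<cdot> u'"
  proof (rule is_Map_uniq[OF X A0 comp_hom[OF u q(2)] comp_hom[OF u' q(2)]])
    fix k \<alpha> assume \<alpha>: "\<alpha> \<in> simplices F0 k"
    show "a0 k \<alpha> \<cdot> q0 \<cdot> u = a0 k \<alpha> \<cdot> q0 \<cdot> u'"
      using eq[OF simplices_union_left[OF \<alpha>]]
        comp_assoc_hom[OF u q(2) is_Map_hom[OF A0 \<alpha>]] comp_assoc_hom[OF u' q(2) is_Map_hom[OF A0 \<alpha>]]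
      by (simp add: glue_left[OF \<alpha>])
  qed
  show "q1 \<cdot> u = q1 \<cdot> u'"
  proof (rule is_Map_uniq[OF X E comp_hom[OF u q(3)] comp_hom[OF u' q(3)]])
    fix k \<alpha> assume \<alpha>: "\<alpha> \<in> simplices (faces \<sigma>) k"
    show "e k \<alpha> \<cdot> q1 \<cdot> u = e k \<alpha> \<cdot> q1 \<cdot> u'"
      using eq[OF simplices_union_right[OF \<alpha>]] glue_right[OF agree \<alpha>]
        comp_assoc_hom[OF u q(3) is_Map_hom[OF E \<alpha>]] comp_assoc_hom[OF u' q(3) is_Map_hom[OF E \<alpha>]]
      by simp
  qed
qed

lemma is_Map_union_pullback:
  "is_Map C X (F0 \<union> faces \<sigma>) Q (glue F0 (\<lambda>k \<alpha>. a0 k \<alpha> \<cdot> q0) (\<lambda>k \<alpha>. e k \<alpha> \<cdot> q1))"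
  by (rule is_MapI[OF q(1) smap_into_glue[OF agree smap_into_comp[OF X is_Map_smap[OF A0] q(2)]
        smap_into_comp[OF X is_Map_smap[OF E] q(3)]] glue_lift glue_uniq])

end

context
  fixes A :: 'o and a :: "nat \<Rightarrow> nat list \<Rightarrow> 'm" and rA rAE :: 'm
  assumes A: "is_Map C X (F0 \<union> faces \<sigma>) A a"
    and rA: "rA \<in> hom C A A0" "\<And>k \<alpha>. \<alpha> \<in> simplices F0 k \<Longrightarrow> a0 k \<alpha> \<cdot> rA = a k \<alpha>"
    and rAE: "rAE \<in> hom C A E" "\<And>k \<alpha>. \<alpha> \<in> simplices (faces \<sigma>) k \<Longrightarrow> e k \<alpha> \<cdot> rAE = a k \<alpha>"
begin

private lemma restrictions_commute: "r0 \<cdot> rA = rE \<cdot> rAE"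
proof (rule is_Map_uniq[OF X D comp_hom[OF rA(1) r0(1)] comp_hom[OF rAE(1) rE(1)]])
  fix k \<alpha> assume \<alpha>: "\<alpha> \<in> simplices (proper_faces \<sigma>) k"
  show "d k \<alpha> \<cdot> r0 \<cdot> rA = d k \<alpha> \<cdot> rE \<cdot> rAE"
    using comp_reassoc_hom[OF rA(1) r0(1) is_Map_hom[OF D \<alpha>] r0(2)[OF \<alpha>]]
      comp_reassoc_hom[OF rAE(1) rE(1) is_Map_hom[OF D \<alpha>] rE(2)[OF \<alpha>]]
      rA(2)[OF simplices_boundary_left[OF \<alpha>]] rAE(2)[OF simplices_boundary_right[OF \<alpha>]] by simp
qed

private lemma restrictions_lift:
  assumes x: "x \<in> hom C U A0" and y: "y \<in> hom C U E" and eq: "r0 \<cdot> x = rE \<cdot> y"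
  shows "\<exists>u \<in> hom C U A. rA \<cdot> u = x \<and> rAE \<cdot> u = y"
proof -
  let ?g = "glue F0 (\<lambda>k \<alpha>. a0 k \<alpha> \<cdot> x) (\<lambda>k \<alpha>. e k \<alpha> \<cdot> y)"
  have agree: "\<forall>k. \<forall>\<alpha> \<in> simplices (proper_faces \<sigma>) k. a0 k \<alpha> \<cdot> x = e k \<alpha> \<cdot> y"
    using restrictions_agree[OF x y eq] by blast
  obtain u where u: "u \<in> hom C U A" "\<And>k \<alpha>. \<alpha> \<in> simplices (F0 \<union> faces \<sigma>) k \<Longrightarrow> a k \<alpha> \<cdot> u = ?g k \<alpha>"
    using is_Map_lift[OF A conjunct1[OF hom_obs[OF x]] smap_into_glue[OF agree
          smap_into_comp[OF X is_Map_smap[OF A0] x] smap_into_comp[OF X is_Map_smap[OF E] y]]] by blast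
  have "rA \<cdot> u = x"
  proof (rule is_Map_uniq[OF X A0 comp_hom[OF u(1) rA(1)] x])
    fix k \<alpha> assume \<alpha>: "\<alpha> \<in> simplices F0 k"
    show "a0 k \<alpha> \<cdot> rA \<cdot> u = a0 k \<alpha> \<cdot> x"
      using comp_reassoc_hom[OF u(1) rA(1) is_Map_hom[OF A0 \<alpha>] rA(2)[OF \<alpha>]]
        u(2)[OF simplices_union_left[OF \<alpha>]] by (simp add: glue_left[OF \<alpha>])
  qed
  moreover have "rAE \<cdot> u = y"
  proof (rule is_Map_uniq[OF X E comp_hom[OF u(1) rAE(1)] y])
    fix k \<alpha> assume \<alpha>: "\<alpha> \<in> simplices (faces \<sigma>) k"
    show "e k \<alpha> \<cdot> rAE \<cdot> u = e k \<alpha> \<cdot> y"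
      using comp_reassoc_hom[OF u(1) rAE(1) is_Map_hom[OF E \<alpha>] rAE(2)[OF \<alpha>]]
        u(2)[OF simplices_union_right[OF \<alpha>]] glue_right[OF agree \<alpha>] by simp
  qed
  ultimately show ?thesis using u(1) by blast
qed

private lemma restrictions_uniq:
  assumes u: "u \<in> hom C U A" and u': "u' \<in> hom C U A"
    and eq0: "rA \<cdot> u = rA \<cdot> u'" and eqE: "rAE \<cdot> u = rAE \<cdot> u'"
  shows "u = u'"
proof (rule is_Map_uniq[OF X A u u'])
  fix k \<alpha> assume "\<alpha> \<in> simplices (F0 \<union> faces \<sigma>) k"
  then show "a k \<alpha> \<cdot> u = a k \<alpha> \<cdot> u'"
  proof (cases rule: simplices_Un_cases)
    case 1
    then show ?thesis
      using comp_reassoc_hom[OF u rA(1) is_Map_hom[OF A0] rA(2)]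
        comp_reassoc_hom[OF u' rA(1) is_Map_hom[OF A0] rA(2)] eq0 by metis
  next
    case 2
    then show ?thesis
      using comp_reassoc_hom[OF u rAE(1) is_Map_hom[OF E] rAE(2)]
        comp_reassoc_hom[OF u' rAE(1) is_Map_hom[OF E] rAE(2)] eqE by metis
  qed
qed

lemma is_Map_union_is_pullback: "is_pullback C r0 rE A rA rAE"
  by (rule is_pullbackI[OF r0(1) rE(1) rA(1) rAE(1) restrictions_commute restrictions_lift
        restrictions_uniq])

end

end

end

lemma is_Map_exists:
  assumes X: "simplicial_object C X" and F: "simplicial_complex F"
  obtains M e where "is_Map C X F M e"
  using F
proof (induction "card F" arbitrary: F thesis rule: less_induct)
  case (less F)
  show ?case
  proof (cases "F = {}")
    case True
    then show ?thesis using terminal_exists is_Map_empty less.prems(1) by blast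
  next
    case False
    then obtain \<sigma> where \<sigma>: "finite \<sigma>" "\<sigma> \<noteq> {}" "simplicial_complex (F - {\<sigma>})"
      "F = (F - {\<sigma>}) \<union> faces \<sigma>" "proper_faces \<sigma> \<subseteq> F - {\<sigma>}"
      "card (F - {\<sigma>}) < card F" "card (proper_faces \<sigma>) < card F"
      using simplicial_complex_remove_maximal_face[OF less.prems(2)] by metis
    obtain A0 a0 where A0: "is_Map C X (F - {\<sigma>}) A0 a0" using less.hyps[OF \<sigma>(6) _ \<sigma>(3)] by blast
    obtain D d where D: "is_Map C X (proper_faces \<sigma>) D d"
      using less.hyps[OF \<sigma>(7) _ simplicial_complex_proper_faces[OF \<sigma>(1)]] by blast
    note E = is_Map_faces[OF X \<sigma>(1,2)]
    obtain r0 where r0: "r0 \<in> hom C A0 D"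
      "\<And>k \<alpha>. \<alpha> \<in> simplices (proper_faces \<sigma>) k \<Longrightarrow> d k \<alpha> \<cdot> r0 = a0 k \<alpha>"
      using is_Map_restriction[OF A0 D simplices_mono[OF \<sigma>(5)]] by blast
    obtain rE where rE: "rE \<in> hom C (sob X (card \<sigma> - 1)) D"
      "\<And>k \<alpha>. \<alpha> \<in> simplices (proper_faces \<sigma>) k \<Longrightarrow> d k \<alpha> \<cdot> rE = sact X k (card \<sigma> - 1) (relabel \<sigma> \<alpha>)"
      using is_Map_restriction[OF E D simplices_proper_faces_subset] by blast
    obtain Q q0 q1 where "is_pullback C r0 rE Q q0 q1"
      using pullback_exists[OF r0(1) rE(1)] .
    from is_Map_union_pullback[OF X \<sigma>(3,1,5) _ A0 E D r0 rE this] \<sigma>(4) show ?thesis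
      using less.prems(1) by auto
  qed
qed

section \<open>Relative mapping objects\<close>

lemma is_Map_relD:
  assumes "is_Map_rel C X Y f S T Ta M a b"
  shows "M \<in> cOb C" "smap_into C X M S Ta a" "smap_into C Y M T Ta b"
    "\<And>k x. x \<in> S k \<Longrightarrow> f k \<cdot> a k x = b k x"
  using assms unfolding is_Map_rel_def by blast+

lemma is_Map_rel_univ:
  assumes R: "is_Map_rel C X Y f S T Ta M a b" and U: "U \<in> cOb C"
    and a': "smap_into C X U S Ta a'" and b': "smap_into C Y U T Ta b'"
    and compat: "\<And>k x. x \<in> S k \<Longrightarrow> f k \<cdot> a' k x = b' k x"
  shows "\<exists>!u. u \<in> hom C U M \<and> (\<forall>k x. x \<in> S k \<longrightarrow> a' k x = a k x \<cdot> u) \<and>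
               (\<forall>k x. x \<in> T k \<longrightarrow> b' k x = b k x \<cdot> u)"
proof -
  have "\<forall>U a' b'. U \<in> cOb C \<longrightarrow> smap_into C X U S Ta a' \<longrightarrow> smap_into C Y U T Ta b' \<longrightarrow>
          (\<forall>k x. x \<in> S k \<longrightarrow> f k \<cdot> a' k x = b' k x) \<longrightarrow>
          (\<exists>!u. u \<in> hom C U M \<and> (\<forall>k x. x \<in> S k \<longrightarrow> a' k x = a k x \<cdot> u) \<and>
                (\<forall>k x. x \<in> T k \<longrightarrow> b' k x = b k x \<cdot> u))"
    using R unfolding is_Map_rel_def by (elim conjE) assumption
  then show ?thesis using U a' b' compat by blast
qed

lemma is_Map_rel_lift:
  assumes R: "is_Map_rel C X Y f S T Ta M a b" and U: "U \<in> cOb C"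
    and a': "smap_into C X U S Ta a'" and b': "smap_into C Y U T Ta b'"
    and compat: "\<And>k x. x \<in> S k \<Longrightarrow> f k \<cdot> a' k x = b' k x"
  obtains u where "u \<in> hom C U M" "\<And>k x. x \<in> S k \<Longrightarrow> a k x \<cdot> u = a' k x"
    "\<And>k x. x \<in> T k \<Longrightarrow> b k x \<cdot> u = b' k x"
  using ex1_implies_ex[OF is_Map_rel_univ[OF assms]] that by force

lemma is_Map_rel_uniq:
  assumes X: "simplicial_object C X" and Y: "simplicial_object C Y"
    and f: "\<And>k. f k \<in> hom C (sob X k) (sob Y k)"
    and R: "is_Map_rel C X Y f S T Ta M a b"
    and u: "u \<in> hom C U M" and u': "u' \<in> hom C U M"
    and eq_a: "\<And>k x. x \<in> S k \<Longrightarrow> a k x \<cdot> u = a k x \<cdot> u'"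
    and eq_b: "\<And>k x. x \<in> T k \<Longrightarrow> b k x \<cdot> u = b k x \<cdot> u'"
  shows "u = u'"
proof -
  note R' = is_Map_relD[OF R]
  have compat: "f k \<cdot> a k x \<cdot> u = b k x \<cdot> u" if "x \<in> S k" for k x
    using comp_reassoc_hom[OF u smap_into_hom[OF R'(2) that] f R'(4)[OF that]] .
  have "\<exists>!v. v \<in> hom C U M \<and> (\<forall>k x. x \<in> S k \<longrightarrow> a k x \<cdot> u = a k x \<cdot> v) \<and>
              (\<forall>k x. x \<in> T k \<longrightarrow> b k x \<cdot> u = b k x \<cdot> v)"
    using is_Map_rel_univ[OF R conjunct1[OF hom_obs[OF u]] smap_into_comp[OF X R'(2) u]
        smap_into_comp[OF Y R'(3) u]] compat by blast
  then obtain v where "\<And>w. w \<in> hom C U M \<and> (\<forall>k x. x \<in> S k \<longrightarrow> a k x \<cdot> u = a k x \<cdot> w) \<and>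
                   (\<forall>k x. x \<in> T k \<longrightarrow> b k x \<cdot> u = b k x \<cdot> w) \<Longrightarrow> w = v"
    by (elim ex1E) blast
  then show ?thesis using u u' eq_a eq_b by metis
qed

lemma is_Map_relI:
  assumes M: "M \<in> cOb C" and a: "smap_into C X M S Ta a" and b: "smap_into C Y M T Ta b"
    and compat: "\<And>k x. x \<in> S k \<Longrightarrow> f k \<cdot> a k x = b k x"
    and lift: "\<And>U a' b'. U \<in> cOb C \<Longrightarrow> smap_into C X U S Ta a' \<Longrightarrow> smap_into C Y U T Ta b' \<Longrightarrow>
      (\<And>k x. x \<in> S k \<Longrightarrow> f k \<cdot> a' k x = b' k x) \<Longrightarrow>
      \<exists>u \<in> hom C U M. (\<forall>k x. x \<in> S k \<longrightarrow> a k x \<cdot> u = a' k x) \<and> (\<forall>k x. x \<in> T k \<longrightarrow> b k x \<cdot> u = b' k x)"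
    and uniq: "\<And>U u u'. u \<in> hom C U M \<Longrightarrow> u' \<in> hom C U M \<Longrightarrow>
      (\<And>k x. x \<in> S k \<Longrightarrow> a k x \<cdot> u = a k x \<cdot> u') \<Longrightarrow> (\<And>k x. x \<in> T k \<Longrightarrow> b k x \<cdot> u = b k x \<cdot> u') \<Longrightarrow>
      u = u'"
  shows "is_Map_rel C X Y f S T Ta M a b"
  unfolding is_Map_rel_def
proof (intro conjI allI impI M a b)
  fix k x assume "x \<in> S k" then show "f k \<cdot> a k x = b k x" by (rule compat)
next
  fix U a' b' assume U: "U \<in> cOb C" and a': "smap_into C X U S Ta a'"
    and b': "smap_into C Y U T Ta b'" and "\<forall>k x. x \<in> S k \<longrightarrow> f k \<cdot> a' k x = b' k x"
  then have "\<And>k x. x \<in> S k \<Longrightarrow> f k \<cdot> a' k x = b' k x" by blast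
  then obtain u where u: "u \<in> hom C U M" "\<forall>k x. x \<in> S k \<longrightarrow> a k x \<cdot> u = a' k x"
    "\<forall>k x. x \<in> T k \<longrightarrow> b k x \<cdot> u = b' k x"
    using lift[OF U a' b'] by blast
  show "\<exists>!u. u \<in> hom C U M \<and> (\<forall>k x. x \<in> S k \<longrightarrow> a' k x = a k x \<cdot> u) \<and>
              (\<forall>k x. x \<in> T k \<longrightarrow> b' k x = b k x \<cdot> u)"
  proof (rule ex1I[of _ u])
    fix u' assume "u' \<in> hom C U M \<and> (\<forall>k x. x \<in> S k \<longrightarrow> a' k x = a k x \<cdot> u') \<and>
                     (\<forall>k x. x \<in> T k \<longrightarrow> b' k x = b k x \<cdot> u')"
    then show "u' = u" using uniq[of u' U u] u by simp
  qed (use u in simp)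
qed

lemma is_Map_rel_comparison:
  assumes X: "simplicial_object C X" and Y: "simplicial_object C Y" and f: "smor C X Y f"
    and R: "is_Map_rel C X Y f (bdry_simplex n) (std_simplex n) simplex_act M a b"
  obtains v where "v \<in> hom C (sob X n) M" "\<And>k \<alpha>. \<alpha> \<in> bdry_simplex n k \<Longrightarrow> a k \<alpha> \<cdot> v = sact X k n \<alpha>"
    "\<And>k \<alpha>. \<alpha> \<in> std_simplex n k \<Longrightarrow> b k \<alpha> \<cdot> v = sact Y k n \<alpha> \<cdot> f n"
proof -
  have sX: "smap_into C X (sob X n) (bdry_simplex n) simplex_act (\<lambda>k \<alpha>. sact X k n \<alpha>)"
    unfolding bdry_simplex_eq by (rule smap_into_sact[OF X]) (auto simp: faces_def proper_faces_def)
  have sY: "smap_into C Y (sob X n) (std_simplex n) simplex_act (\<lambda>k \<alpha>. sact Y k n \<alpha> \<cdot> f n)"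
    unfolding std_simplex_eq by (rule smap_into_comp[OF Y smap_into_sact[OF Y order_refl] smor_hom[OF f]])
  show ?thesis
    using is_Map_rel_lift[OF R sob_obj[OF X] sX sY] smor_natural[OF f] that
    by (auto simp: bdry_simplex_def)
qed

lemma is_Map_rel_id:
  assumes Y: "simplicial_object C Y" and E: "is_Map C Y G E e"
    and sub: "\<And>k. simplices F k \<subseteq> simplices G k"
  shows "is_Map_rel C Y Y (\<lambda>k. cId C (sob Y k)) (simplices F) (simplices G) simplex_act E e e"
proof (rule is_Map_relI[OF is_Map_obj[OF E] smap_into_mono[OF is_Map_smap[OF E] sub] is_Map_smap[OF E]])
  fix k x assume "x \<in> simplices F k"
  then show "cId C (sob Y k) \<cdot> e k x = e k x" using id_comp[OF is_Map_hom[OF E]] sub by blast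
next
  fix U a' b' assume U: "U \<in> cOb C" and a': "smap_into C Y U (simplices F) simplex_act a'"
    and b': "smap_into C Y U (simplices G) simplex_act b'"
    and compat: "\<And>k x. x \<in> simplices F k \<Longrightarrow> cId C (sob Y k) \<cdot> a' k x = b' k x"
  obtain u where u: "u \<in> hom C U E" "\<And>k x. x \<in> simplices G k \<Longrightarrow> e k x \<cdot> u = b' k x"
    using is_Map_lift[OF E U b'] by blast
  have "e k x \<cdot> u = a' k x" if "x \<in> simplices F k" for k x
    using compat[OF that] id_comp[OF smap_into_hom[OF a' that]] u(2) sub that by auto
  then show "\<exists>u \<in> hom C U E. (\<forall>k x. x \<in> simplices F k \<longrightarrow> e k x \<cdot> u = a' k x) \<and>
               (\<forall>k x. x \<in> simplices G k \<longrightarrow> e k x \<cdot> u = b' k x)"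
    using u by blast
next
  fix U u u' assume "u \<in> hom C U E" "u' \<in> hom C U E"
    "\<And>k x. x \<in> simplices G k \<Longrightarrow> e k x \<cdot> u = e k x \<cdot> u'"
  then show "u = u'" using is_Map_uniq[OF Y E] by blast
qed

context
  fixes X Y Z :: "('o, 'm) sobj" and f g :: "nat \<Rightarrow> 'm" and F T MX aX MY aY w M a b r P p1 p2
  assumes X: "simplicial_object C X" and Y: "simplicial_object C Y" and Z: "simplicial_object C Z"
    and f: "smor C X Y f" and g: "\<And>k. g k \<in> hom C (sob Y k) (sob Z k)"
    and MX: "is_Map C X F MX aX" and MY: "is_Map C Y F MY aY"
    and w: "w \<in> hom C MX MY" "\<And>k \<alpha>. \<alpha> \<in> simplices F k \<Longrightarrow> aY k \<alpha> \<cdot> w = f k \<cdot> aX k \<alpha>"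
    and R: "is_Map_rel C Y Z g (simplices F) T simplex_act M a b"
    and r: "r \<in> hom C M MY" "\<And>k \<alpha>. \<alpha> \<in> simplices F k \<Longrightarrow> aY k \<alpha> \<cdot> r = a k \<alpha>"
    and pb: "is_pullback C w r P p1 p2"
begin

private lemmas p = pullback_homs[OF pb w(1) r(1)] and R' = is_Map_relD[OF R]

lemma is_Map_rel_pullback_restrict:
  assumes \<alpha>: "\<alpha> \<in> simplices F k"
  shows "a k \<alpha> \<cdot> p2 = f k \<cdot> aX k \<alpha> \<cdot> p1"
proof -
  note aY = is_Map_hom[OF MY \<alpha>]
  have "a k \<alpha> \<cdot> p2 = aY k \<alpha> \<cdot> w \<cdot> p1"
    using comp_reassoc_hom[OF p(3) r(1) aY r(2)[OF \<alpha>]] p(4) by simp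
  also have "\<dots> = f k \<cdot> aX k \<alpha> \<cdot> p1"
    using comp_reassoc_hom[OF p(2) w(1) aY w(2)[OF \<alpha>]]
      comp_assoc_hom[OF p(2) is_Map_hom[OF MX \<alpha>] smor_hom[OF f]] by simp
  finally show ?thesis .
qed

private lemma pullback_lift_Map_rel:
  assumes U: "U \<in> cOb C" and a': "smap_into C X U (simplices F) simplex_act a'"
    and b': "smap_into C Z U T simplex_act b'"
    and compat: "\<And>k x. x \<in> simplices F k \<Longrightarrow> (g k \<cdot> f k) \<cdot> a' k x = b' k x"
  shows "\<exists>z \<in> hom C U P. (\<forall>k \<alpha>. \<alpha> \<in> simplices F k \<longrightarrow> (aX k \<alpha> \<cdot> p1) \<cdot> z = a' k \<alpha>) \<and>
           (\<forall>k \<alpha>. \<alpha> \<in> T k \<longrightarrow> (b k \<alpha> \<cdot> p2) \<cdot> z = b' k \<alpha>)"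
proof -
  obtain x where x: "x \<in> hom C U MX" "\<And>k \<alpha>. \<alpha> \<in> simplices F k \<Longrightarrow> aX k \<alpha> \<cdot> x = a' k \<alpha>"
    using is_Map_lift[OF MX U a'] by blast
  have "g k \<cdot> f k \<cdot> a' k \<alpha> = b' k \<alpha>" if "\<alpha> \<in> simplices F k" for k \<alpha>
    using compat[OF that] comp_assoc_hom[OF smap_into_hom[OF a' that] smor_hom[OF f] g] by simp
  then obtain y where y: "y \<in> hom C U M" "\<And>k \<alpha>. \<alpha> \<in> simplices F k \<Longrightarrow> a k \<alpha> \<cdot> y = f k \<cdot> a' k \<alpha>"
    "\<And>k \<alpha>. \<alpha> \<in> T k \<Longrightarrow> b k \<alpha> \<cdot> y = b' k \<alpha>"
    using is_Map_rel_lift[OF R U smap_into_smor[OF X Y f a'] b'] by blast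
  have "w \<cdot> x = r \<cdot> y"
  proof (rule is_Map_uniq[OF Y MY comp_hom[OF x(1) w(1)] comp_hom[OF y(1) r(1)]])
    fix k \<alpha> assume \<alpha>: "\<alpha> \<in> simplices F k"
    show "aY k \<alpha> \<cdot> w \<cdot> x = aY k \<alpha> \<cdot> r \<cdot> y"
      using comp_reassoc_hom[OF x(1) w(1) is_Map_hom[OF MY \<alpha>] w(2)[OF \<alpha>]]
        comp_assoc_hom[OF x(1) is_Map_hom[OF MX \<alpha>] smor_hom[OF f]] x(2)[OF \<alpha>]
        comp_reassoc_hom[OF y(1) r(1) is_Map_hom[OF MY \<alpha>] r(2)[OF \<alpha>]] y(2)[OF \<alpha>] by simp
  qed
  then obtain z where z: "z \<in> hom C U P" "p1 \<cdot> z = x" "p2 \<cdot> z = y"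
    using pullback_lift[OF pb w(1) r(1) x(1) y(1)] by metis
  have "(aX k \<alpha> \<cdot> p1) \<cdot> z = a' k \<alpha>" if "\<alpha> \<in> simplices F k" for k \<alpha>
    using comp_assoc_hom[OF z(1) p(2) is_Map_hom[OF MX that]] z(2) x(2)[OF that] by simp
  moreover have "(b k \<alpha> \<cdot> p2) \<cdot> z = b' k \<alpha>" if "\<alpha> \<in> T k" for k \<alpha>
    using comp_assoc_hom[OF z(1) p(3) smap_into_hom[OF R'(3) that]] z(3) y(3)[OF that] by simp
  ultimately show ?thesis using z(1) by blast
qed

private lemma pullback_uniq_Map_rel:
  assumes u: "u \<in> hom C U P" and u': "u' \<in> hom C U P"
    and eq_a: "\<And>k \<alpha>. \<alpha> \<in> simplices F k \<Longrightarrow> (aX k \<alpha> \<cdot> p1) \<cdot> u = (aX k \<alpha> \<cdot> p1) \<cdot> u'"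
    and eq_b: "\<And>k \<alpha>. \<alpha> \<in> T k \<Longrightarrow> (b k \<alpha> \<cdot> p2) \<cdot> u = (b k \<alpha> \<cdot> p2) \<cdot> u'"
  shows "u = u'"
proof -
  have p1: "p1 \<cdot> u = p1 \<cdot> u'"
  proof (rule is_Map_uniq[OF X MX comp_hom[OF u p(2)] comp_hom[OF u' p(2)]])
    fix k \<alpha> assume \<alpha>: "\<alpha> \<in> simplices F k"
    then show "aX k \<alpha> \<cdot> p1 \<cdot> u = aX k \<alpha> \<cdot> p1 \<cdot> u'"
      using eq_a comp_assoc_hom[OF u p(2) is_Map_hom[OF MX \<alpha>]]
        comp_assoc_hom[OF u' p(2) is_Map_hom[OF MX \<alpha>]] by simp
  qed
  have "p2 \<cdot> u = p2 \<cdot> u'"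
  proof (rule is_Map_rel_uniq[OF Y Z g R comp_hom[OF u p(3)] comp_hom[OF u' p(3)]])
    fix k \<alpha> assume \<alpha>: "\<alpha> \<in> simplices F k"
    have "a k \<alpha> \<cdot> p2 \<cdot> v = f k \<cdot> aX k \<alpha> \<cdot> p1 \<cdot> v" if v: "v \<in> hom C U P" for v
      using comp_reassoc_hom[OF v p(3) smap_into_hom[OF R'(2) \<alpha>] is_Map_rel_pullback_restrict[OF \<alpha>]]
        comp_assoc_hom[OF v comp_hom[OF p(2) is_Map_hom[OF MX \<alpha>]] smor_hom[OF f]]
        comp_assoc_hom[OF v p(2) is_Map_hom[OF MX \<alpha>]] by simp
    then show "a k \<alpha> \<cdot> p2 \<cdot> u = a k \<alpha> \<cdot> p2 \<cdot> u'" using u u' p1 by simp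
  next
    fix k \<alpha> assume \<alpha>: "\<alpha> \<in> T k"
    then show "b k \<alpha> \<cdot> p2 \<cdot> u = b k \<alpha> \<cdot> p2 \<cdot> u'"
      using eq_b comp_assoc_hom[OF u p(3) smap_into_hom[OF R'(3) \<alpha>]]
        comp_assoc_hom[OF u' p(3) smap_into_hom[OF R'(3) \<alpha>]] by simp
  qed
  then show "u = u'" using pullback_uniq[OF pb w(1) r(1) u u' p1] by blast
qed

lemma is_Map_rel_pullback:
  "is_Map_rel C X Z (\<lambda>k. g k \<cdot> f k) (simplices F) T simplex_act P
     (\<lambda>k \<alpha>. aX k \<alpha> \<cdot> p1) (\<lambda>k \<alpha>. b k \<alpha> \<cdot> p2)"
proof (rule is_Map_relI[OF p(1) smap_into_comp[OF X is_Map_smap[OF MX] p(2)]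
      smap_into_comp[OF Z R'(3) p(3)] _ pullback_lift_Map_rel pullback_uniq_Map_rel])
  fix k \<alpha> assume \<alpha>: "\<alpha> \<in> simplices F k"
  have "(g k \<cdot> f k) \<cdot> aX k \<alpha> \<cdot> p1 = g k \<cdot> a k \<alpha> \<cdot> p2"
    using comp_assoc_hom[OF comp_hom[OF p(2) is_Map_hom[OF MX \<alpha>]] smor_hom[OF f] g] is_Map_rel_pullback_restrict[OF \<alpha>]
    by simp
  also have "\<dots> = b k \<alpha> \<cdot> p2"
    using comp_reassoc_hom[OF p(3) smap_into_hom[OF R'(2) \<alpha>] g R'(4)[OF \<alpha>]] .
  finally show "(g k \<cdot> f k) \<cdot> aX k \<alpha> \<cdot> p1 = b k \<alpha> \<cdot> p2" .
qed

end

section \<open>Hypercovers\<close>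

lemma is_Map_rel_reindex:
  assumes X: "simplicial_object C X" and Y: "simplicial_object C Y"
    and f: "\<And>k. f k \<in> hom C (sob X k) (sob Y k)"
    and R: "is_Map_rel C X Y f (simplices G1) (simplices G2) simplex_act M a b"
    and g1: "\<And>k \<gamma>. \<gamma> \<in> simplices H1 k \<Longrightarrow> map g \<gamma> \<in> simplices G1 k"
    and g2: "\<And>k \<gamma>. \<gamma> \<in> simplices H2 k \<Longrightarrow> map g \<gamma> \<in> simplices G2 k"
    and g'1: "\<And>k \<alpha>. \<alpha> \<in> simplices G1 k \<Longrightarrow> map g' \<alpha> \<in> simplices H1 k"
    and g'2: "\<And>k \<alpha>. \<alpha> \<in> simplices G2 k \<Longrightarrow> map g' \<alpha> \<in> simplices H2 k"
    and inv1: "\<And>k \<gamma>. \<gamma> \<in> simplices H1 k \<Longrightarrow> map g' (map g \<gamma>) = \<gamma>"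
    and inv2: "\<And>k \<gamma>. \<gamma> \<in> simplices H2 k \<Longrightarrow> map g' (map g \<gamma>) = \<gamma>"
    and inv'1: "\<And>k \<alpha>. \<alpha> \<in> simplices G1 k \<Longrightarrow> map g (map g' \<alpha>) = \<alpha>"
    and inv'2: "\<And>k \<alpha>. \<alpha> \<in> simplices G2 k \<Longrightarrow> map g (map g' \<alpha>) = \<alpha>"
  shows "is_Map_rel C X Y f (simplices H1) (simplices H2) simplex_act M
           (\<lambda>k \<gamma>. a k (map g \<gamma>)) (\<lambda>k \<gamma>. b k (map g \<gamma>))"
proof -
  note R' = is_Map_relD[OF R]
  show ?thesis
  proof (rule is_Map_relI[OF R'(1) smap_into_reindex[OF R'(2) g1] smap_into_reindex[OF R'(3) g2]])
    fix k \<gamma> assume "\<gamma> \<in> simplices H1 k"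
    then show "f k \<cdot> a k (map g \<gamma>) = b k (map g \<gamma>)" using R'(4) g1 by blast
  next
    fix U a' b' assume U: "U \<in> cOb C" and a': "smap_into C X U (simplices H1) simplex_act a'"
      and b': "smap_into C Y U (simplices H2) simplex_act b'"
      and compat: "\<And>k \<gamma>. \<gamma> \<in> simplices H1 k \<Longrightarrow> f k \<cdot> a' k \<gamma> = b' k \<gamma>"
    obtain u where u: "u \<in> hom C U M" "\<And>k \<alpha>. \<alpha> \<in> simplices G1 k \<Longrightarrow> a k \<alpha> \<cdot> u = a' k (map g' \<alpha>)"
      "\<And>k \<alpha>. \<alpha> \<in> simplices G2 k \<Longrightarrow> b k \<alpha> \<cdot> u = b' k (map g' \<alpha>)"
      using is_Map_rel_lift[OF R U smap_into_reindex[OF a' g'1] smap_into_reindex[OF b' g'2]]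
        compat g'1 by blast
    then show "\<exists>u \<in> hom C U M. (\<forall>k \<gamma>. \<gamma> \<in> simplices H1 k \<longrightarrow> a k (map g \<gamma>) \<cdot> u = a' k \<gamma>) \<and>
                 (\<forall>k \<gamma>. \<gamma> \<in> simplices H2 k \<longrightarrow> b k (map g \<gamma>) \<cdot> u = b' k \<gamma>)"
      using g1 g2 inv1 inv2 by metis
  next
    fix U u u' assume u: "u \<in> hom C U M" and u': "u' \<in> hom C U M"
      and eq_a: "\<And>k \<gamma>. \<gamma> \<in> simplices H1 k \<Longrightarrow> a k (map g \<gamma>) \<cdot> u = a k (map g \<gamma>) \<cdot> u'"
      and eq_b: "\<And>k \<gamma>. \<gamma> \<in> simplices H2 k \<Longrightarrow> b k (map g \<gamma>) \<cdot> u = b k (map g \<gamma>) \<cdot> u'"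
    show "u = u'"
      by (rule is_Map_rel_uniq[OF X Y f R u u']) (metis eq_a g'1 inv'1, metis eq_b g'2 inv'2)
  qed
qed

text \<open>The hypercover condition, transported from \<open>\<Delta>^m\<close> to an arbitrary face \<open>\<sigma>\<close> with \<open>m + 1\<close> vertices.\<close>
lemma hypercover_face:
  assumes X: "simplicial_object C X" and Y: "simplicial_object C Y" and f: "smor C X Y f"
    and hc: "hypercover C Cov X Y f" and \<sigma>: "finite \<sigma>" "\<sigma> \<noteq> {}"
    and R: "is_Map_rel C X Y f (simplices (proper_faces \<sigma>)) (simplices (faces \<sigma>)) simplex_act M a b"
    and v: "v \<in> hom C (sob X (card \<sigma> - 1)) M"
    and va: "\<And>k \<alpha>. \<alpha> \<in> simplices (proper_faces \<sigma>) k \<Longrightarrow>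
               sact X k (card \<sigma> - 1) (relabel \<sigma> \<alpha>) = a k \<alpha> \<cdot> v"
    and vb: "\<And>k \<alpha>. \<alpha> \<in> simplices (faces \<sigma>) k \<Longrightarrow>
               sact Y k (card \<sigma> - 1) (relabel \<sigma> \<alpha>) \<cdot> f (card \<sigma> - 1) = b k \<alpha> \<cdot> v"
  shows "v \<in> Cov"
proof -
  let ?m = "card \<sigma> - 1"
  have "card \<sigma> > 0" using \<sigma> by (simp add: card_gt_0_iff)
  then have faces_sub: "set \<gamma> \<subseteq> {..<card \<sigma>}" if "\<gamma> \<in> simplices (faces {0..?m}) k" for \<gamma> k
    using that by (auto simp: simplices_def faces_def)
  note proper_sub = faces_sub[OF subsetD[OF simplices_proper_faces_subset]]
  have face_sub: "set \<alpha> \<subseteq> \<sigma>" if "\<alpha> \<in> simplices (faces \<sigma>) k" for \<alpha> k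
    using that by (auto simp: simplices_def faces_def)
  note proper_face_sub = face_sub[OF subsetD[OF simplices_proper_faces_subset]]
  have R': "is_Map_rel C X Y f (bdry_simplex ?m) (std_simplex ?m) simplex_act M
              (\<lambda>k \<gamma>. a k (unrelabel \<sigma> \<gamma>)) (\<lambda>k \<gamma>. b k (unrelabel \<sigma> \<gamma>))"
    using unrelabel_proper_simplices[OF \<sigma>] unrelabel_simplices[OF \<sigma>(1) _ \<sigma>(2)]
      relabel_proper_simplices[OF \<sigma>(1)] relabel_simplices(1)[OF \<sigma>(1)]
      relabel_unrelabel[OF \<sigma>(1) proper_sub] relabel_unrelabel[OF \<sigma>(1) faces_sub]
      unrelabel_relabel[OF \<sigma>(1) proper_face_sub] unrelabel_relabel[OF \<sigma>(1) face_sub]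
    unfolding bdry_simplex_eq std_simplex_eq relabel_def unrelabel_def
    by - (rule is_Map_rel_reindex[OF X Y smor_hom[OF f] R], assumption+)
  show ?thesis
  proof (rule hc[unfolded hypercover_def, rule_format, OF R' v])
    fix k \<gamma> assume "\<gamma> \<in> bdry_simplex ?m k"
    then show "sact X k ?m \<gamma> = a k (unrelabel \<sigma> \<gamma>) \<cdot> v"
      using va[OF unrelabel_proper_simplices[OF \<sigma>]] relabel_unrelabel[OF \<sigma>(1) proper_sub]
      unfolding bdry_simplex_eq by metis
  next
    fix k \<gamma> assume "\<gamma> \<in> std_simplex ?m k"
    then show "sact Y k ?m \<gamma> \<cdot> f ?m = b k (unrelabel \<sigma> \<gamma>) \<cdot> v"
      using vb[OF unrelabel_simplices[OF \<sigma>(1) _ \<sigma>(2)]] relabel_unrelabel[OF \<sigma>(1) faces_sub]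
      unfolding std_simplex_eq by metis
  qed
qed

lemma id_comp_smor: "smor C X Y f \<Longrightarrow> (\<lambda>k. cId C (sob Y k) \<cdot> f k) = f"
  using id_comp[OF smor_hom] by (intro ext)

lemma is_Map_restriction_natural:
  assumes Y: "simplicial_object C Y" and f: "\<And>k. f k \<in> hom C (sob X k) (sob Y k)"
    and sub: "\<And>k. simplices F k \<subseteq> simplices G k"
    and AG: "is_Map C X G AG aG" and BG: "is_Map C Y G BG bG"
    and AF: "is_Map C X F AF aF" and BF: "is_Map C Y F BF bF"
    and wG: "wG \<in> hom C AG BG" "\<And>k \<alpha>. \<alpha> \<in> simplices G k \<Longrightarrow> bG k \<alpha> \<cdot> wG = f k \<cdot> aG k \<alpha>"
    and wF: "wF \<in> hom C AF BF" "\<And>k \<alpha>. \<alpha> \<in> simplices F k \<Longrightarrow> bF k \<alpha> \<cdot> wF = f k \<cdot> aF k \<alpha>"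
    and rX: "rX \<in> hom C AG AF" "\<And>k \<alpha>. \<alpha> \<in> simplices F k \<Longrightarrow> aF k \<alpha> \<cdot> rX = aG k \<alpha>"
    and rY: "rY \<in> hom C BG BF" "\<And>k \<alpha>. \<alpha> \<in> simplices F k \<Longrightarrow> bF k \<alpha> \<cdot> rY = bG k \<alpha>"
  shows "rY \<cdot> wG = wF \<cdot> rX"
proof (rule is_Map_uniq[OF Y BF comp_hom[OF wG(1) rY(1)] comp_hom[OF rX(1) wF(1)]])
  fix k \<alpha> assume \<alpha>: "\<alpha> \<in> simplices F k"
  note bF = is_Map_hom[OF BF \<alpha>]
  have "bF k \<alpha> \<cdot> rY \<cdot> wG = f k \<cdot> aG k \<alpha>"
    using comp_reassoc_hom[OF wG(1) rY(1) bF rY(2)[OF \<alpha>]] wG(2)[OF subsetD[OF sub \<alpha>]] by simp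
  also have "\<dots> = bF k \<alpha> \<cdot> wF \<cdot> rX"
    using comp_reassoc_hom[OF rX(1) wF(1) bF wF(2)[OF \<alpha>]]
      comp_assoc_hom[OF rX(1) is_Map_hom[OF AF \<alpha>] f] rX(2)[OF \<alpha>] by simp
  finally show "bF k \<alpha> \<cdot> rY \<cdot> wG = bF k \<alpha> \<cdot> wF \<cdot> rX" .
qed

context
  fixes X Y :: "('o, 'm) sobj" and f :: "nat \<Rightarrow> 'm"
  assumes X: "simplicial_object C X" and Y: "simplicial_object C Y" and f: "smor C X Y f"
    and hc: "hypercover C Cov X Y f"
begin

lemma hypercover_latching_cover:
  assumes \<sigma>: "finite \<sigma>" "\<sigma> \<noteq> {}" and m: "m = card \<sigma> - 1"
    and DX: "is_Map C X (proper_faces \<sigma>) DX dX" and DY: "is_Map C Y (proper_faces \<sigma>) DY dY"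
    and wD: "wD \<in> hom C DX DY" "\<And>k \<alpha>. \<alpha> \<in> simplices (proper_faces \<sigma>) k \<Longrightarrow> dY k \<alpha> \<cdot> wD = f k \<cdot> dX k \<alpha>"
    and rEX: "rEX \<in> hom C (sob X m) DX"
      "\<And>k \<alpha>. \<alpha> \<in> simplices (proper_faces \<sigma>) k \<Longrightarrow> dX k \<alpha> \<cdot> rEX = sact X k m (relabel \<sigma> \<alpha>)"
    and rEY: "rEY \<in> hom C (sob Y m) DY"
      "\<And>k \<alpha>. \<alpha> \<in> simplices (proper_faces \<sigma>) k \<Longrightarrow> dY k \<alpha> \<cdot> rEY = sact Y k m (relabel \<sigma> \<alpha>)"
    and pb: "is_pullback C wD rEY Rel l1 l2"
    and s: "s \<in> hom C (sob X m) Rel" "l1 \<cdot> s = rEX" "l2 \<cdot> s = f m"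
  shows "s \<in> Cov"
proof -
  note EY = is_Map_faces[OF Y \<sigma>, folded m]
  have "is_Map_rel C X Y (\<lambda>k. cId C (sob Y k) \<cdot> f k) (simplices (proper_faces \<sigma>)) (simplices (faces \<sigma>))
          simplex_act Rel (\<lambda>k \<alpha>. dX k \<alpha> \<cdot> l1) (\<lambda>k \<alpha>. sact Y k m (relabel \<sigma> \<alpha>) \<cdot> l2)"
    by (rule is_Map_rel_pullback[OF X Y Y f id_hom[OF sob_obj[OF Y]] DX DY wD
          is_Map_rel_id[OF Y EY simplices_proper_faces_subset] rEY pb])
  then have R: "is_Map_rel C X Y f (simplices (proper_faces \<sigma>)) (simplices (faces \<sigma>))
          simplex_act Rel (\<lambda>k \<alpha>. dX k \<alpha> \<cdot> l1) (\<lambda>k \<alpha>. sact Y k m (relabel \<sigma> \<alpha>) \<cdot> l2)"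
    unfolding id_comp_smor[OF f] .
  note l = pullback_homs[OF pb wD(1) rEY(1)]
  show ?thesis
  proof (rule hypercover_face[OF X Y f hc \<sigma> R s(1)[unfolded m]], unfold m[symmetric])
    fix k \<alpha> assume "\<alpha> \<in> simplices (proper_faces \<sigma>) k"
    then show "sact X k m (relabel \<sigma> \<alpha>) = (dX k \<alpha> \<cdot> l1) \<cdot> s"
      using comp_assoc_hom[OF s(1) l(2) is_Map_hom[OF DX]] s(2) rEX(2) by simp
  next
    fix k \<alpha> assume "\<alpha> \<in> simplices (faces \<sigma>) k"
    then show "sact Y k m (relabel \<sigma> \<alpha>) \<cdot> f m = (sact Y k m (relabel \<sigma> \<alpha>) \<cdot> l2) \<cdot> s"
      using comp_assoc_hom[OF s(1) l(3) is_Map_hom[OF EY]] s(3) by simp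
  qed
qed

lemma hypercover_Map_cover_attach_face:
  assumes F0: "simplicial_complex F0" and \<sigma>: "finite \<sigma>" "\<sigma> \<noteq> {}"
    and boundary: "proper_faces \<sigma> \<subseteq> F0" and new: "\<sigma> \<notin> F0"
    and IH: "\<And>A0 a0 B0 b0 w0. is_Map C X F0 A0 a0 \<Longrightarrow> is_Map C Y F0 B0 b0 \<Longrightarrow> w0 \<in> hom C A0 B0 \<Longrightarrow>
               (\<And>k \<alpha>. \<alpha> \<in> simplices F0 k \<Longrightarrow> b0 k \<alpha> \<cdot> w0 = f k \<cdot> a0 k \<alpha>) \<Longrightarrow> w0 \<in> Cov"
    and A: "is_Map C X (F0 \<union> faces \<sigma>) A aA" and B: "is_Map C Y (F0 \<union> faces \<sigma>) B aB"
    and w: "w \<in> hom C A B" "\<And>k \<alpha>. \<alpha> \<in> simplices (F0 \<union> faces \<sigma>) k \<Longrightarrow> aB k \<alpha> \<cdot> w = f k \<cdot> aA k \<alpha>"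
  shows "w \<in> Cov"
proof -
  define m where "m = card \<sigma> - 1"
  note EX = is_Map_faces[OF X \<sigma>, folded m_def] and EY = is_Map_faces[OF Y \<sigma>, folded m_def]
  note fhom = smor_hom[OF f]
  have fm: "sact Y k m (relabel \<sigma> \<alpha>) \<cdot> f m = f k \<cdot> sact X k m (relabel \<sigma> \<alpha>)"
    if "\<alpha> \<in> simplices (faces \<sigma>) k" for k \<alpha>
    using smor_natural[OF f] relabel_simplices(1)[OF \<sigma>(1) that] delta_iff_simplices
    unfolding m_def by simp
  have bd_faces: "\<And>k. simplices (proper_faces \<sigma>) k \<subseteq> simplices (faces \<sigma>) k"
    and bd_F0: "\<And>k. simplices (proper_faces \<sigma>) k \<subseteq> simplices F0 k"
    and F0_F: "\<And>k. simplices F0 k \<subseteq> simplices (F0 \<union> faces \<sigma>) k"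
    and faces_F: "\<And>k. simplices (faces \<sigma>) k \<subseteq> simplices (F0 \<union> faces \<sigma>) k"
    using simplices_proper_faces_subset simplices_mono[OF boundary] simplices_mono by auto
  obtain A0 a0 where A0: "is_Map C X F0 A0 a0" by (rule is_Map_exists[OF X F0])
  obtain B0 b0 where B0: "is_Map C Y F0 B0 b0" by (rule is_Map_exists[OF Y F0])
  obtain DX dX where DX: "is_Map C X (proper_faces \<sigma>) DX dX"
    by (rule is_Map_exists[OF X simplicial_complex_proper_faces[OF \<sigma>(1)]])
  obtain DY dY where DY: "is_Map C Y (proper_faces \<sigma>) DY dY"
    by (rule is_Map_exists[OF Y simplicial_complex_proper_faces[OF \<sigma>(1)]])
  obtain rA where rA: "rA \<in> hom C A A0" "\<And>k \<alpha>. \<alpha> \<in> simplices F0 k \<Longrightarrow> a0 k \<alpha> \<cdot> rA = aA k \<alpha>"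
    using is_Map_restriction[OF A A0 F0_F] by blast
  obtain rAE where rAE: "rAE \<in> hom C A (sob X m)"
      "\<And>k \<alpha>. \<alpha> \<in> simplices (faces \<sigma>) k \<Longrightarrow> sact X k m (relabel \<sigma> \<alpha>) \<cdot> rAE = aA k \<alpha>"
    using is_Map_restriction[OF A EX faces_F] by blast
  obtain rB where rB: "rB \<in> hom C B B0" "\<And>k \<alpha>. \<alpha> \<in> simplices F0 k \<Longrightarrow> b0 k \<alpha> \<cdot> rB = aB k \<alpha>"
    using is_Map_restriction[OF B B0 F0_F] by blast
  obtain rBE where rBE: "rBE \<in> hom C B (sob Y m)"
      "\<And>k \<alpha>. \<alpha> \<in> simplices (faces \<sigma>) k \<Longrightarrow> sact Y k m (relabel \<sigma> \<alpha>) \<cdot> rBE = aB k \<alpha>"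
    using is_Map_restriction[OF B EY faces_F] by blast
  obtain rA0D where rA0D: "rA0D \<in> hom C A0 DX"
      "\<And>k \<alpha>. \<alpha> \<in> simplices (proper_faces \<sigma>) k \<Longrightarrow> dX k \<alpha> \<cdot> rA0D = a0 k \<alpha>"
    using is_Map_restriction[OF A0 DX bd_F0] by blast
  obtain rB0D where rB0D: "rB0D \<in> hom C B0 DY"
      "\<And>k \<alpha>. \<alpha> \<in> simplices (proper_faces \<sigma>) k \<Longrightarrow> dY k \<alpha> \<cdot> rB0D = b0 k \<alpha>"
    using is_Map_restriction[OF B0 DY bd_F0] by blast
  obtain rEX where rEX: "rEX \<in> hom C (sob X m) DX"
      "\<And>k \<alpha>. \<alpha> \<in> simplices (proper_faces \<sigma>) k \<Longrightarrow> dX k \<alpha> \<cdot> rEX = sact X k m (relabel \<sigma> \<alpha>)"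
    using is_Map_restriction[OF EX DX bd_faces] by blast
  obtain rEY where rEY: "rEY \<in> hom C (sob Y m) DY"
      "\<And>k \<alpha>. \<alpha> \<in> simplices (proper_faces \<sigma>) k \<Longrightarrow> dY k \<alpha> \<cdot> rEY = sact Y k m (relabel \<sigma> \<alpha>)"
    using is_Map_restriction[OF EY DY bd_faces] by blast
  obtain w0 where w0: "w0 \<in> hom C A0 B0" "\<And>k \<alpha>. \<alpha> \<in> simplices F0 k \<Longrightarrow> b0 k \<alpha> \<cdot> w0 = f k \<cdot> a0 k \<alpha>"
    using is_Map_lift[OF B0 is_Map_obj[OF A0] smap_into_smor[OF X Y f is_Map_smap[OF A0]]] by blast
  obtain wD where wD: "wD \<in> hom C DX DY"
      "\<And>k \<alpha>. \<alpha> \<in> simplices (proper_faces \<sigma>) k \<Longrightarrow> dY k \<alpha> \<cdot> wD = f k \<cdot> dX k \<alpha>"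
    using is_Map_lift[OF DY is_Map_obj[OF DX] smap_into_smor[OF X Y f is_Map_smap[OF DX]]] by blast
  have w0_cover: "w0 \<in> Cov" by (rule IH[OF A0 B0 w0])
  have nat_w0: "rB0D \<cdot> w0 = wD \<cdot> rA0D"
    by (rule is_Map_restriction_natural[OF Y fhom bd_F0 A0 B0 DX DY w0 wD rA0D rB0D])
  have nat_fm: "rEY \<cdot> f m = wD \<cdot> rEX"
    by (rule is_Map_restriction_natural[OF Y fhom bd_faces EX EY DX DY fhom _ wD rEX rEY]) (simp_all add: fm)
  have nat_w: "rB \<cdot> w = w0 \<cdot> rA"
    by (rule is_Map_restriction_natural[OF Y fhom F0_F A B A0 B0 w w0 rA rB])
  have nat_w_face: "rBE \<cdot> w = f m \<cdot> rAE"
    by (rule is_Map_restriction_natural[OF Y fhom faces_F A B EX EY w fhom _ rAE rBE]) (simp_all add: fm)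
  note pbA = is_Map_union_is_pullback[OF X F0 \<sigma>(1) boundary new A0 EX DX rA0D rEX A rA rAE]
  note pbB = is_Map_union_is_pullback[OF Y F0 \<sigma>(1) boundary new B0 EY DY rB0D rEY B rB rBE]
  show ?thesis
  proof (rule pullback_map_cover[OF pbA pbB rA0D(1) rEX(1) rB0D(1) rEY(1) w0(1) wD(1) fhom w(1)
        nat_w0 nat_fm nat_w nat_w_face w0_cover])
    fix R l1 l2 s assume "is_pullback C wD rEY R l1 l2" "s \<in> hom C (sob X m) R" "l1 \<cdot> s = rEX"
      "l2 \<cdot> s = f m"
    from hypercover_latching_cover[OF \<sigma> m_def DX DY wD rEX rEY this] show "s \<in> Cov" .
  qed
qed

lemma hypercover_Map_cover:
  assumes "simplicial_complex F" "is_Map C X F A aA" "is_Map C Y F B aB"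
    "w \<in> hom C A B" "\<And>k \<alpha>. \<alpha> \<in> simplices F k \<Longrightarrow> aB k \<alpha> \<cdot> w = f k \<cdot> aA k \<alpha>"
  shows "w \<in> Cov"
  using assms
proof (induction "card F" arbitrary: F A aA B aB w rule: less_induct)
  case (less F)
  show ?case
  proof (cases "F = {}")
    case True
    then have A: "is_Map C X {} A aA" and B: "is_Map C Y {} B aB" using less.prems by simp_all
    obtain j where j: "j \<in> hom C B A"
      using is_Map_lift[OF A is_Map_obj[OF B] smap_into_empty] by blast
    have "j \<cdot> w = cId C A"
      by (rule is_Map_uniq[OF X A comp_hom[OF less.prems(4) j] id_hom[OF is_Map_obj[OF A]]])
        (simp add: simplices_def)
    moreover have "w \<cdot> j = cId C B"
      by (rule is_Map_uniq[OF Y B comp_hom[OF j less.prems(4)] id_hom[OF is_Map_obj[OF B]]])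
        (simp add: simplices_def)
    ultimately show ?thesis using iso_cover[OF less.prems(4) j] by blast
  next
    case False
    then obtain \<sigma> where \<sigma>: "\<sigma> \<in> F" "finite \<sigma>" "\<sigma> \<noteq> {}" "simplicial_complex (F - {\<sigma>})"
      "F = (F - {\<sigma>}) \<union> faces \<sigma>" "proper_faces \<sigma> \<subseteq> F - {\<sigma>}" "card (F - {\<sigma>}) < card F"
      using simplicial_complex_remove_maximal_face[OF less.prems(1)] by metis
    show ?thesis
      using hypercover_Map_cover_attach_face[OF \<sigma>(4,2,3,6), of A aA B aB w] less.hyps[OF \<sigma>(7,4)]
        less.prems(2-5) \<sigma>(5) by auto
  qed
qed

lemma hypercover_component_cover: "f n \<in> Cov"
proof -
  have card: "card {0..n} - 1 = n" by simp
  have "sact Y k n (relabel {0..n} \<alpha>) \<cdot> f n = f k \<cdot> sact X k n (relabel {0..n} \<alpha>)"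
    if "\<alpha> \<in> simplices (faces {0..n}) k" for k \<alpha>
    using smor_natural[OF f] relabel_simplices(1)[OF _ that] delta_iff_simplices by simp
  then show ?thesis
    using hypercover_Map_cover[OF simplicial_complex_faces[of "{0..n}"]
        is_Map_faces[OF X, of "{0..n}", unfolded card] is_Map_faces[OF Y, of "{0..n}", unfolded card]
        smor_hom[OF f]] by simp
qed

end

text \<open>For a hypercover \<open>f\<close>, the map \<open>Map(F \<hookrightarrow> T, g \<circ> f) \<rightarrow> Map(F \<hookrightarrow> T, g)\<close> is a cover, being a pullback
  of \<open>Map(F, X) \<rightarrow> Map(F, Y)\<close>.\<close>
lemma hypercover_Map_rel_comp:
  assumes X: "simplicial_object C X" and Y: "simplicial_object C Y" and Z: "simplicial_object C Z"
    and f: "smor C X Y f" and g: "\<And>k. g k \<in> hom C (sob Y k) (sob Z k)"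
    and hf: "hypercover C Cov X Y f" and F: "simplicial_complex F"
    and R: "is_Map_rel C Y Z g (simplices F) T simplex_act M a b"
  obtains P aP bP p where "is_Map_rel C X Z (\<lambda>k. g k \<cdot> f k) (simplices F) T simplex_act P aP bP"
    "p \<in> hom C P M" "p \<in> Cov" "\<And>k \<alpha>. \<alpha> \<in> simplices F k \<Longrightarrow> a k \<alpha> \<cdot> p = f k \<cdot> aP k \<alpha>"
    "\<And>k \<alpha>. \<alpha> \<in> T k \<Longrightarrow> b k \<alpha> \<cdot> p = bP k \<alpha>"
proof -
  obtain MX aX where MX: "is_Map C X F MX aX" by (rule is_Map_exists[OF X F])
  obtain MY aY where MY: "is_Map C Y F MY aY" by (rule is_Map_exists[OF Y F])
  obtain w where w: "w \<in> hom C MX MY" "\<And>k \<alpha>. \<alpha> \<in> simplices F k \<Longrightarrow> aY k \<alpha> \<cdot> w = f k \<cdot> aX k \<alpha>"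
    using is_Map_lift[OF MY is_Map_obj[OF MX] smap_into_smor[OF X Y f is_Map_smap[OF MX]]] by blast
  obtain r where r: "r \<in> hom C M MY" "\<And>k \<alpha>. \<alpha> \<in> simplices F k \<Longrightarrow> aY k \<alpha> \<cdot> r = a k \<alpha>"
    using is_Map_lift[OF MY is_Map_relD(1,2)[OF R]] by blast
  obtain P p1 p2 where pb: "is_pullback C w r P p1 p2" using pullback_exists[OF w(1) r(1)] .
  have "w \<in> Cov" by (rule hypercover_Map_cover[OF X Y f hf F MX MY w])
  then show ?thesis
    using that[OF is_Map_rel_pullback[OF X Y Z f g MX MY w R r pb] _ pullback_cover[OF _ pb]]
      pullback_homs(3)[OF pb w(1) r(1)] is_Map_rel_pullback_restrict[OF X Y Z f g MX MY w R r pb]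
    by blast
qed

lemma hypercover_comparison_comp_cover:
  assumes X: "simplicial_object C X" and Y: "simplicial_object C Y" and Z: "simplicial_object C Z"
    and f: "smor C X Y f" and g: "smor C Y Z g"
    and hf: "hypercover C Cov X Y f" and hgf: "hypercover C Cov X Z (smor_comp C g f)"
    and R: "is_Map_rel C Y Z g (bdry_simplex n) (std_simplex n) simplex_act M a b"
    and u: "u \<in> hom C (sob Y n) M"
    and ua: "\<And>k \<alpha>. \<alpha> \<in> bdry_simplex n k \<Longrightarrow> sact Y k n \<alpha> = a k \<alpha> \<cdot> u"
    and ub: "\<And>k \<alpha>. \<alpha> \<in> std_simplex n k \<Longrightarrow> sact Z k n \<alpha> \<cdot> g n = b k \<alpha> \<cdot> u"
  shows "u \<cdot> f n \<in> Cov"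
proof -
  note fn = smor_hom[OF f, of n] and gn = smor_hom[OF g, of n]
  note R' = R[unfolded bdry_simplex_eq std_simplex_eq]
  obtain P aP bP p where P: "is_Map_rel C X Z (smor_comp C g f) (bdry_simplex n) (std_simplex n)
      simplex_act P aP bP" and p: "p \<in> hom C P M" "p \<in> Cov"
    and pa: "\<And>k \<alpha>. \<alpha> \<in> bdry_simplex n k \<Longrightarrow> a k \<alpha> \<cdot> p = f k \<cdot> aP k \<alpha>"
    and pb: "\<And>k \<alpha>. \<alpha> \<in> std_simplex n k \<Longrightarrow> b k \<alpha> \<cdot> p = bP k \<alpha>"
    by (rule hypercover_Map_rel_comp[OF X Y Z f smor_hom[OF g] hf
          simplicial_complex_proper_faces[OF finite_atLeastAtMost] R'])
      (simp_all add: smor_comp_def bdry_simplex_eq std_simplex_eq)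
  obtain v where v: "v \<in> hom C (sob X n) P" "\<And>k \<alpha>. \<alpha> \<in> bdry_simplex n k \<Longrightarrow> aP k \<alpha> \<cdot> v = sact X k n \<alpha>"
    "\<And>k \<alpha>. \<alpha> \<in> std_simplex n k \<Longrightarrow> bP k \<alpha> \<cdot> v = sact Z k n \<alpha> \<cdot> g n \<cdot> f n"
    using is_Map_rel_comparison[OF X Z smor_smor_comp[OF X Y Z f g] P] by (auto simp: smor_comp_def)
  have "v \<in> Cov"
    using hgf[unfolded hypercover_def, rule_format, OF P v(1)] v(2,3) by (simp add: smor_comp_def)
  moreover have "p \<cdot> v = u \<cdot> f n"
  proof (rule is_Map_rel_uniq[OF Y Z smor_hom[OF g] R comp_hom[OF v(1) p(1)] comp_hom[OF fn u]])
    fix k \<alpha> assume \<alpha>: "\<alpha> \<in> bdry_simplex n k"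
    then have "delta k n \<alpha>" by (simp add: bdry_simplex_def)
    then show "a k \<alpha> \<cdot> p \<cdot> v = a k \<alpha> \<cdot> u \<cdot> f n"
      using comp_reassoc_hom[OF v(1) p(1) smap_into_hom[OF is_Map_relD(2)[OF R] \<alpha>] pa[OF \<alpha>]]
        comp_assoc_hom[OF v(1) smap_into_hom[OF is_Map_relD(2)[OF P] \<alpha>] smor_hom[OF f]] v(2)[OF \<alpha>]
        smor_natural[OF f] comp_reassoc_hom[OF fn u smap_into_hom[OF is_Map_relD(2)[OF R] \<alpha>]] ua[OF \<alpha>]
      by simp
  next
    fix k \<alpha> assume \<alpha>: "\<alpha> \<in> std_simplex n k"
    then have "delta k n \<alpha>" by (simp add: std_simplex_def)
    then have "b k \<alpha> \<cdot> u \<cdot> f n = sact Z k n \<alpha> \<cdot> g n \<cdot> f n"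
      using comp_reassoc_hom[OF fn u smap_into_hom[OF is_Map_relD(3)[OF R] \<alpha>] ub[OF \<alpha>, symmetric]]
        comp_assoc_hom[OF fn gn sact_hom[OF Z]] by simp
    then show "b k \<alpha> \<cdot> p \<cdot> v = b k \<alpha> \<cdot> u \<cdot> f n"
      using comp_reassoc_hom[OF v(1) p(1) smap_into_hom[OF is_Map_relD(3)[OF R] \<alpha>] pb[OF \<alpha>]] v(3)[OF \<alpha>]
      by simp
  qed
  ultimately show ?thesis using comp_cover[OF _ p(2), of v] v(1) p(1) by (simp add: hom_def)
qed

end

theorem lemma3p18:
  fixes C :: "('o, 'm) cat" and Cov :: "'m set"
    and X Y Z :: "('o, 'm) sobj" and f g :: "nat \<Rightarrow> 'm"
  assumes "descent_category C Cov"
    and "simplicial_object C X" and "simplicial_object C Y" and "simplicial_object C Z"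
    and "smor C X Y f" and "smor C Y Z g"
    and "hypercover C Cov X Y f"
    and "hypercover C Cov X Z (smor_comp C g f)"
  shows "hypercover C Cov Y Z g"
proof -
  interpret descent_cat C Cov by (rule descent_cat.intro) (rule assms(1))
  show ?thesis
    unfolding hypercover_def
  proof (intro allI impI)
    fix n M a b u
    assume R: "is_Map_rel C Y Z g (bdry_simplex n) (std_simplex n) simplex_act M a b"
      and u: "u \<in> hom C (sob Y n) M"
      and "\<forall>k \<alpha>. \<alpha> \<in> bdry_simplex n k \<longrightarrow> sact Y k n \<alpha> = a k \<alpha> \<cdot> u"
      and "\<forall>k \<alpha>. \<alpha> \<in> std_simplex n k \<longrightarrow> sact Z k n \<alpha> \<cdot> g n = b k \<alpha> \<cdot> u"
    then have "u \<cdot> f n \<in> Cov"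
      using hypercover_comparison_comp_cover[OF assms(2-8) R u] by blast
    moreover have "f n \<in> Cov"
      by (rule hypercover_component_cover[OF assms(2,3,5,7)])
    ultimately show "u \<in> Cov"
      using cover_cancel[of "f n" u] smor_hom[OF assms(5), of n] u by (simp add: hom_def)
  qed
qed

end
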